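(* Let $X$ be a pure $d$-dimensional weighted simplicial complex with $d\ge2$, and let $\lambda\in(0,1]$. Suppose that (i) for every $\tau\in X$ with $\dim\tau\le d-2$ (including $\tau=\emptyset$) the 1-skeleton of $X_\tau$ is connected, and (ii) for every $\tau\in X(d-2)$ the second largest eigenvalue of the adjacency operator of the 1-skeleton of $X_\tau$ is at most $\frac{\lambda}{1+(d-1)\lambda}$. Then $X$ is a $\lambda$-local spectral expander.
   Context: A pure $d$-dimensional simplicial complex $X$ is a finite family of finite sets closed under taking subsets, all of whose maximal members have $d+1$ elements; $X(i)$ denotes the set of faces with $i+1$ elements, $\dim\tau=|\tau|-1$, $X(-1)=\{\emptyset\}$. A weighted complex is equipped with a probability distribution $\Pi$ on $X(d)$; the weight of $\tau\in X(i)$ is $w(\tau)=\binom{d+1}{i+1}^{-1}\sum_{\sigma\in X(d),\,\sigma\supseteq\tau}\Pi(\sigma)$. The link of $\tau$ is $X_\tau=\{\sigma\setminus\tau:\ \tau\subseteq\sigma\in X\}$, weighted by the distribution $\Pi_\tau(\eta)=\Pi(\eta\cup\tau)/\sum_{\sigma\in X(d),\sigma\supseteq\tau}\Pi(\sigma)$ on its top faces, with induced weights $w_\tau$ by the same formula; $X_\emptyset=X$. For a weighted complex $Y$ of dimension $\ge1$, the normalized adjacency operator of its 1-skeleton acts on $f:Y(0)\to\mathbb R$ by $(Af)(v)=\sum_{u:\{u,v\}\in Y(1)}\frac{w(\{v,u\})}{2w(v)}f(u)$; it is self-adjoint w.r.t. $\langle f,g\rangle=\sum_v w(v)f(v)g(v)$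 and has real eigenvalues $1=\lambda_1\ge\lambda_2\ge\cdots$. $X$ is a $\lambda$-local spectral expander if for every $-1\le i\le d-2$ and every $\tau\in X(i)$ the 1-skeleton of $X_\tau$ is connected and its adjacency operator has $\lambda_2\le\lambda$. *)

theory Defs
  imports "Jordan_Normal_Form.Char_Poly" "HOL-Library.Multiset"
begin

definition pure_complex :: "'a set set \<Rightarrow> nat \<Rightarrow> bool" where
  "pure_complex X k \<longleftrightarrow> finite X \<and> X \<noteq> {} \<and> (\<forall>\<sigma>\<in>X. finite \<sigma>) \<and>
     (\<forall>\<sigma>\<in>X. \<forall>\<tau>. \<tau> \<subseteq> \<sigma> \<longrightarrow> \<tau> \<in> X) \<and>
     (\<forall>\<sigma>\<in>X. card \<sigma> \<le> k + 1) \<and>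
     (\<forall>\<sigma>\<in>X. \<exists>\<eta>\<in>X. \<sigma> \<subseteq> \<eta> \<and> card \<eta> = k + 1)"

definition top_faces :: "'a set set \<Rightarrow> nat \<Rightarrow> 'a set set" where
  "top_faces X k = {\<sigma>\<in>X. card \<sigma> = k + 1}"

definition weighted_complex :: "'a set set \<Rightarrow> nat \<Rightarrow> ('a set \<Rightarrow> real) \<Rightarrow> bool" where
  "weighted_complex X k P \<longleftrightarrow> pure_complex X k \<and> (\<forall>\<sigma>\<in>top_faces X k. P \<sigma> > 0) \<and>
     (\<Sum>\<sigma>\<in>top_faces X k. P \<sigma>) = 1"

definition weight :: "'a set set \<Rightarrow> nat \<Rightarrow> ('a set \<Rightarrow> real) \<Rightarrow> 'a set \<Rightarrow> real" where
  "weight X k P \<tau> = (\<Sum>\<sigma>\<in>{\<sigma>\<in>top_faces X k. \<tau> \<subseteq> \<sigma>}. P \<sigma>) / real ((k + 1) choose card \<tau>)"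

definition link :: "'a set set \<Rightarrow> 'a set \<Rightarrow> 'a set set" where
  "link X \<tau> = {\<sigma> - \<tau> | \<sigma>. \<sigma> \<in> X \<and> \<tau> \<subseteq> \<sigma>}"

definition link_dist :: "'a set set \<Rightarrow> nat \<Rightarrow> ('a set \<Rightarrow> real) \<Rightarrow> 'a set \<Rightarrow> 'a set \<Rightarrow> real" where
  "link_dist X k P \<tau> \<eta> = P (\<eta> \<union> \<tau>) / (\<Sum>\<sigma>\<in>{\<sigma>\<in>top_faces X k. \<tau> \<subseteq> \<sigma>}. P \<sigma>)"

definition vertices :: "'a set set \<Rightarrow> 'a set" where
  "vertices Y = {v. {v} \<in> Y}"

definition skel_edge :: "'a set set \<Rightarrow> 'a \<Rightarrow> 'a \<Rightarrow> bool" where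
  "skel_edge Y u v \<longleftrightarrow> u \<noteq> v \<and> {u, v} \<in> Y"

definition skel_connected :: "'a set set \<Rightarrow> bool" where
  "skel_connected Y \<longleftrightarrow> (\<forall>u\<in>vertices Y. \<forall>v\<in>vertices Y. (skel_edge Y)\<^sup>*\<^sup>* u v)"

(* a fixed enumeration of the vertex set (the spectrum does not depend on the choice) *)
definition vertex_list :: "'a set set \<Rightarrow> 'a list" where
  "vertex_list Y = (SOME xs. distinct xs \<and> set xs = vertices Y)"

definition adj_matrix :: "'a set set \<Rightarrow> nat \<Rightarrow> ('a set \<Rightarrow> real) \<Rightarrow> real mat" where
  "adj_matrix Y k P = (let vs = vertex_list Y; n = length vs in
     mat n n (\<lambda>(i, j). if skel_edge Y (vs ! i) (vs ! j)
        then weight Y k P {vs ! i, vs ! j} / (2 * weight Y k P {vs ! i}) else 0))"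

definition eigenvalues_desc :: "'a set set \<Rightarrow> nat \<Rightarrow> ('a set \<Rightarrow> real) \<Rightarrow> real list" where
  "eigenvalues_desc Y k P = rev (sorted_list_of_multiset (proots (char_poly (adj_matrix Y k P))))"

definition lambda2 :: "'a set set \<Rightarrow> nat \<Rightarrow> ('a set \<Rightarrow> real) \<Rightarrow> real" where
  "lambda2 Y k P = eigenvalues_desc Y k P ! 1"

(* lambda-local spectral expander: for every tau in X(i), -1 <= i <= d-2 *)
definition local_spectral_expander :: "'a set set \<Rightarrow> nat \<Rightarrow> ('a set \<Rightarrow> real) \<Rightarrow> real \<Rightarrow> bool" where
  "local_spectral_expander X d P lam \<longleftrightarrow>
     (\<forall>\<tau>\<in>X. card \<tau> + 1 \<le> d \<longrightarrow>
        skel_connected (link X \<tau>) \<and>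
        lambda2 (link X \<tau>) (d - card \<tau>) (link_dist X d P \<tau>) \<le> lam)"

end

theory Submission
  imports Defs "HOL-Analysis.Function_Topology"
begin

text \<open>Garland's method. For a face \<open>\<tau>\<close>, the quadratic form of the random walk on the link
  of \<open>\<tau>\<close> is an average of the quadratic forms of the walks on the links of the faces
  \<open>\<tau> \<union> {x}\<close>, and the mean of \<open>f\<close> over the link of \<open>\<tau> \<union> {x}\<close> is \<open>(A f)(x)\<close>. Hence if all these
  smaller links satisfy \<open>\<langle>A g, g\<rangle> \<le> \<mu> \<langle>g, g\<rangle>\<close> for \<open>g \<perp> 1\<close>, the walk on the link of \<open>\<tau>\<close>
  satisfies \<open>\<langle>A f, f\<rangle> \<le> \<mu> \<langle>f, f\<rangle> + (1 - \<mu>) \<langle>A f, A f\<rangle>\<close>, which for an eigenfunction with eigenvalue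
  \<open>e < 1\<close> (connectivity makes the eigenvalue 1 simple) gives \<open>e \<le> \<mu> / (1 - \<mu>)\<close>. Starting from
  \<open>\<lambda> / (1 + (d - 1) \<lambda>)\<close> at the faces of dimension \<open>d - 2\<close> and iterating \<open>\<mu> \<mapsto> \<mu> / (1 - \<mu>)\<close>
  gives \<open>\<lambda> / (1 + |\<tau>| \<lambda>) \<le> \<lambda>\<close> at every face \<open>\<tau>\<close>. Bounds on the second eigenvalue and
  Rayleigh-quotient bounds on the orthogonal complement of the constants are exchanged via the
  variational characterisation of the spectrum of the reversible walk on each link.\<close>

lemma cnj_mult_self: "cnj z * z = complex_of_real ((cmod z)^2)"
  by (metis complex_norm_square mult.commute)

lemma linear_coeff_zero_if_quadratic_nonpos:
  fixes a b :: real
  assumes "\<And>t. a * t + b * t^2 \<le> 0"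
  shows "a = 0"
proof (rule ccontr)
  assume a: "a \<noteq> 0"
  define c where "c = \<bar>b\<bar> + 1"
  have c: "0 < c" unfolding c_def by simp
  define t where "t = a / (2 * c)"
  have "- c * t^2 \<le> b * t^2" unfolding c_def by (intro mult_right_mono) auto
  moreover have "c * t^2 = a^2 / (4 * c)" "a * t = 2 * (a^2 / (4 * c))"
    unfolding t_def using c by (simp_all add: power2_eq_square field_simps)
  moreover have "0 < a^2 / (4 * c)" using a c by simp
  ultimately have "0 < a * t + b * t^2" by linarith
  then show False using assms[of t] by simp
qed

lemma abs_le_1_plus_square: "\<bar>x::real\<bar> \<le> 1 + x^2"
proof (cases "\<bar>x\<bar> \<le> 1")
  case False
  then have "\<bar>x\<bar> * 1 \<le> \<bar>x\<bar> * \<bar>x\<bar>" by (intro mult_left_mono) auto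
  then show ?thesis by (simp add: power2_eq_square)
qed (simp add: add_increasing2)

lemma compact_box_fun: "compact (Pi\<^sub>E UNIV (\<lambda>i. if i < (n::nat) then {-R..R} else {0::real}))"
proof -
  have "compactin (product_topology (\<lambda>i. euclidean) UNIV)
      (Pi\<^sub>E UNIV (\<lambda>i. if i < n then {-R..R} else {0::real}))"
    by (subst compactin_PiE) (auto simp: compactin_euclidean_iff)
  then show ?thesis unfolding euclidean_product_topology compactin_euclidean_iff .
qed

lemma continuous_on_coordinate: "continuous_on S (\<lambda>x::nat \<Rightarrow> real. x i)"
  by (rule continuous_on_subset[OF continuous_on_product_coordinates]) simp

lemma index_mult_mat_sum:
  "P \<in> carrier_mat n n \<Longrightarrow> R \<in> carrier_mat n n \<Longrightarrow> i < n \<Longrightarrow> j < n \<Longrightarrow>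
   (P * R) $$ (i,j) = (\<Sum>k<n. P $$ (i,k) * R $$ (k,j))"
  by (simp add: scalar_prod_def lessThan_atLeast0)

lemma index_mult_mat_vec_sum:
  "P \<in> carrier_mat n n \<Longrightarrow> v \<in> carrier_vec n \<Longrightarrow> i < n \<Longrightarrow>
   (P *\<^sub>v v) $ i = (\<Sum>k<n. P $$ (i,k) * v $ k)"
  by (simp add: scalar_prod_def lessThan_atLeast0)

lemma proots_prod_linear_factors: "proots (\<Prod>e\<leftarrow>es. [:-e, 1::real:]) = mset es"
proof (induction es)
  case (Cons a es)
  have "(\<Prod>e\<leftarrow>es. [:-e, 1::real:]) \<noteq> 0" by (auto simp: prod_list_zero_iff)
  then have "proots ([:-a, 1:] * (\<Prod>e\<leftarrow>es. [:-e, 1::real:]))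
      = proots [:-a, 1:] + proots (\<Prod>e\<leftarrow>es. [:-e, 1::real:])"
    by (intro proots_mult) auto
  then show ?case using Cons.IH by (simp add: proots_linear_factor)
qed simp

lemma second_largest_add_mset:
  fixes a :: "'a::linorder"
  assumes "M \<noteq> {#}" and "\<forall>x\<in>#M. x < a"
  shows "rev (sorted_list_of_multiset (add_mset a M)) ! 1 \<in># M"
    and "x \<in># M \<Longrightarrow> x \<le> rev (sorted_list_of_multiset (add_mset a M)) ! 1"
proof -
  define xs where "xs = sorted_list_of_multiset M"
  have "mset xs = M" by (simp add: xs_def)
  then have xs: "sorted xs" "set xs = set_mset M" "xs \<noteq> []"
    using assms(1) by (auto simp: xs_def simp del: mset_sorted_list_of_multiset)
  have "mset (xs @ [a]) = add_mset a M" by (simp add: xs_def)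
  moreover have "sorted (xs @ [a])" using xs assms(2) by (auto simp: sorted_append less_imp_le)
  ultimately have "sorted_list_of_multiset (add_mset a M) = xs @ [a]"
    by (metis sorted_list_of_multiset_mset sorted_sort_id)
  then have second: "rev (sorted_list_of_multiset (add_mset a M)) ! 1 = xs ! (length xs - 1)"
    using xs(3) by (simp add: rev_nth)
  show "rev (sorted_list_of_multiset (add_mset a M)) ! 1 \<in># M"
    unfolding second using xs(2,3) by (metis diff_less length_greater_0_conv less_one nth_mem)
  assume "x \<in># M"
  then obtain i where "i < length xs" "xs ! i = x" using xs(2) by (metis in_set_conv_nth)
  then show "x \<le> rev (sorted_list_of_multiset (add_mset a M)) ! 1"
    unfolding second using sorted_nth_mono[OF xs(1)] by auto
qed

lemma sum_skip_point:
  assumes "finite A"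
  shows "(\<Sum>u\<in>A. if u = a then 0 else g u) = (\<Sum>u\<in>A - {a}. g u)"
proof -
  have "(\<Sum>u\<in>A. if u = a then 0 else g u) = (\<Sum>u\<in>A - {a}. if u = a then 0 else g u)"
    by (rule sum.mono_neutral_right) (use assms in auto)
  then show ?thesis by simp
qed

lemma real_choose_two: "real (Suc k choose 2) = real (Suc k) * real k / 2"
  by (simp add: choose_two real_of_nat_div algebra_simps)

text \<open>The entry \<open>w({a,b}) / (2 w({a}))\<close> of the adjacency operator of a \<open>k\<close>-dimensional link,
  where \<open>binom(k+1, 2) = (1+k) k / 2\<close> and \<open>binom(k+1, 1) = 1 + k\<close>.\<close>
lemma adjacency_weight_ratio:
  fixes e s a k :: real
  assumes "0 < s" and "0 < a" and "0 < k"
  shows "(e / (s * ((1 + k) * k / 2))) / (2 * (a / (s * (1 + k)))) = e / (k * a)"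
  using assms by (simp add: divide_simps)

lemma sum_nth_distinct: "distinct xs \<Longrightarrow> (\<Sum>j<length xs. g (xs ! j)) = (\<Sum>v\<in>set xs. g v)"
  by (rule sum.reindex_bij_betw[OF bij_betw_nth]) auto

lemma trickle_down_ratio:
  fixes lam :: real
  assumes "0 < lam"
  shows "(lam / (1 + real (Suc j) * lam)) / (1 - lam / (1 + real (Suc j) * lam)) = lam / (1 + real j * lam)"
proof -
  have pos: "0 < 1 + real j * lam" "0 < 1 + real (Suc j) * lam" using assms by (simp_all add: add_pos_nonneg)
  then have "1 - lam / (1 + real (Suc j) * lam) = (1 + real j * lam) / (1 + real (Suc j) * lam)"
    by (simp add: field_simps)
  then show ?thesis using pos by simp
qed

section \<open>Matrices that are self-adjoint for a weighted inner product\<close>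

locale reversible_matrix =
  fixes n :: nat and w :: "nat \<Rightarrow> real" and A :: "real mat"
  assumes carrier: "A \<in> carrier_mat n n"
    and weight_pos: "\<And>i. i < n \<Longrightarrow> 0 < w i"
    and reversible: "\<And>i j. i < n \<Longrightarrow> j < n \<Longrightarrow> w i * A $$ (i,j) = w j * A $$ (j,i)"
begin

definition inner_w :: "(nat \<Rightarrow> real) \<Rightarrow> (nat \<Rightarrow> real) \<Rightarrow> real" where
  "inner_w f g = (\<Sum>i<n. w i * f i * g i)"

definition act :: "(nat \<Rightarrow> real) \<Rightarrow> nat \<Rightarrow> real" where
  "act f i = (\<Sum>j<n. A $$ (i,j) * f j)"

definition quad_form :: "(nat \<Rightarrow> real) \<Rightarrow> real" where
  "quad_form f = inner_w (act f) f"

definition eigenfun :: "(nat \<Rightarrow> real) \<Rightarrow> real \<Rightarrow> bool" where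
  "eigenfun g e \<longleftrightarrow> (\<forall>i<n. act g i = e * g i) \<and> (\<exists>i<n. g i \<noteq> 0)"

lemma inner_w_commute: "inner_w f g = inner_w g f"
  unfolding inner_w_def by (simp add: ac_simps)

lemma inner_w_add_left: "inner_w (\<lambda>i. f i + c * g i) h = inner_w f h + c * inner_w g h"
  unfolding inner_w_def by (simp add: algebra_simps sum.distrib sum_distrib_left)

lemma inner_w_scale_left: "inner_w (\<lambda>i. c * f i) h = c * inner_w f h"
  unfolding inner_w_def by (simp add: algebra_simps sum_distrib_left)

lemma inner_w_cong:
  "(\<And>i. i < n \<Longrightarrow> f i = f' i) \<Longrightarrow> (\<And>i. i < n \<Longrightarrow> g i = g' i) \<Longrightarrow> inner_w f g = inner_w f' g'"
  unfolding inner_w_def by (intro sum.cong) auto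

lemma inner_w_self_term_nonneg: "i < n \<Longrightarrow> 0 \<le> w i * f i * f i"
  using weight_pos[of i] by (simp add: mult.assoc)

lemma inner_w_self_nonneg: "0 \<le> inner_w f f"
  unfolding inner_w_def using inner_w_self_term_nonneg by (intro sum_nonneg) auto

lemma inner_w_self_eq_0D:
  assumes "inner_w f f = 0" and "i < n"
  shows "f i = 0"
proof -
  have "\<forall>j\<in>{..<n}. w j * f j * f j = 0"
    using assms(1) unfolding inner_w_def
    by (subst sum_nonneg_eq_0_iff[symmetric]) (use inner_w_self_term_nonneg in auto)
  then show ?thesis using assms(2) weight_pos[OF assms(2)] by force
qed

lemma inner_w_self_pos: "i < n \<Longrightarrow> f i \<noteq> 0 \<Longrightarrow> 0 < inner_w f f"
  using inner_w_self_nonneg[of f] inner_w_self_eq_0D[of f i] by force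

lemma inner_w_self_add:
  "inner_w (\<lambda>i. f i + t * h i) (\<lambda>i. f i + t * h i) = inner_w f f + 2 * t * inner_w f h + t^2 * inner_w h h"
  unfolding inner_w_def power2_eq_square
  by (simp add: algebra_simps sum.distrib sum_distrib_left)

lemma inner_w_self_scale: "inner_w (\<lambda>i. c * f i) (\<lambda>i. c * f i) = c^2 * inner_w f f"
  unfolding inner_w_def power2_eq_square by (simp add: algebra_simps sum_distrib_left)

lemma act_cong: "(\<And>i. i < n \<Longrightarrow> f i = f' i) \<Longrightarrow> act f = act f'"
  unfolding act_def by (intro ext sum.cong) auto

lemma act_add: "act (\<lambda>i. f i + c * g i) = (\<lambda>i. act f i + c * act g i)"
  unfolding act_def by (simp add: algebra_simps sum.distrib sum_distrib_left)

lemma act_scale: "act (\<lambda>i. c * g i) = (\<lambda>i. c * act g i)"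
  unfolding act_def by (simp add: algebra_simps sum_distrib_left)

lemma inner_w_act_commute: "inner_w (act f) g = inner_w f (act g)"
proof -
  have "inner_w (act f) g = (\<Sum>i<n. \<Sum>j<n. w i * A$$(i,j) * f j * g i)"
    unfolding inner_w_def act_def by (simp add: sum_distrib_left sum_distrib_right ac_simps)
  also have "\<dots> = (\<Sum>j<n. \<Sum>i<n. w i * A$$(i,j) * f j * g i)" by (rule sum.swap)
  also have "\<dots> = (\<Sum>j<n. \<Sum>i<n. w j * A$$(j,i) * f j * g i)"
    using reversible by (intro sum.cong refl) auto
  also have "\<dots> = inner_w f (act g)"
    unfolding inner_w_def act_def by (simp add: sum_distrib_left sum_distrib_right ac_simps)
  finally show ?thesis .
qed

lemma quad_form_cong: "(\<And>i. i < n \<Longrightarrow> f i = f' i) \<Longrightarrow> quad_form f = quad_form f'"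
  unfolding quad_form_def using act_cong[of f f'] inner_w_cong[of _ _ f f'] by metis

lemma quad_form_add:
  "quad_form (\<lambda>i. f i + t * h i) = quad_form f + 2 * t * inner_w (act f) h + t^2 * quad_form h"
proof -
  have "quad_form (\<lambda>i. f i + t * h i)
      = inner_w (act f) f + t * inner_w (act f) h + t * inner_w (act h) f + t^2 * inner_w (act h) h"
    unfolding quad_form_def act_add inner_w_def power2_eq_square
    by (simp add: algebra_simps sum.distrib sum_distrib_left)
  moreover have "inner_w (act h) f = inner_w (act f) h"
    using inner_w_act_commute inner_w_commute by metis
  ultimately show ?thesis unfolding quad_form_def by simp
qed

lemma quad_form_scale: "quad_form (\<lambda>i. c * f i) = c^2 * quad_form f"
  unfolding quad_form_def act_scale inner_w_def power2_eq_square
  by (simp add: algebra_simps sum_distrib_left)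

lemma quad_form_eigenfun: "eigenfun g e \<Longrightarrow> quad_form g = e * inner_w g g"
  unfolding quad_form_def eigenfun_def
  by (subst inner_w_cong[of _ "\<lambda>i. e * g i" g g]) (auto simp: inner_w_scale_left)

lemma mult_mat_vec_eq_act: "v \<in> carrier_vec n \<Longrightarrow> i < n \<Longrightarrow> (A *\<^sub>v v) $ i = act (\<lambda>j. v $ j) i"
  using carrier unfolding act_def by (simp add: scalar_prod_def lessThan_atLeast0)

lemma eigenfun_root_char_poly:
  assumes "eigenfun g e"
  shows "poly (char_poly A) e = 0"
proof -
  obtain i0 where i0: "i0 < n" "g i0 \<noteq> 0" using assms unfolding eigenfun_def by blast
  define v where "v = vec n g"
  have v: "v \<in> carrier_vec n" unfolding v_def by simp
  have "v \<noteq> 0\<^sub>v n" using i0 unfolding v_def by (metis index_vec index_zero_vec(1))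
  moreover have "A *\<^sub>v v = e \<cdot>\<^sub>v v"
  proof (rule eq_vecI)
    fix i assume "i < dim_vec (e \<cdot>\<^sub>v v)"
    then have i: "i < n" using v by simp
    have "(A *\<^sub>v v) $ i = act g i"
      unfolding mult_mat_vec_eq_act[OF v i] by (rule fun_cong[OF act_cong]) (simp add: v_def)
    then show "(A *\<^sub>v v) $ i = (e \<cdot>\<^sub>v v) $ i"
      using assms i unfolding eigenfun_def v_def by simp
  qed (use carrier v in auto)
  ultimately have "eigenvalue A e"
    unfolding eigenvalue_def eigenvector_def using carrier v by auto
  then show ?thesis using eigenvalue_root_char_poly[OF carrier] by simp
qed

text \<open>The usual argument that self-adjoint matrices have real spectrum, run over \<open>\<complex>\<close>:
  for an eigenvector \<open>v\<close>, the sesquilinear form \<open>\<Sum> w\<^sub>i A\<^sub>i\<^sub>j conj(v\<^sub>i) v\<^sub>j\<close> is real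
  and equals the eigenvalue times a positive real.\<close>
lemma complex_eigenvalue_real:
  assumes "eigenvalue (of_real_hom.mat_hom A) a"
  shows "Im a = 0"
proof -
  let ?Ac = "of_real_hom.mat_hom A :: complex mat"
  have Ac: "?Ac \<in> carrier_mat n n" using carrier by auto
  obtain v where "eigenvector ?Ac v a" using assms unfolding eigenvalue_def by blast
  then have v: "v \<in> carrier_vec n" and v0: "v \<noteq> 0\<^sub>v n" and Av: "?Ac *\<^sub>v v = a \<cdot>\<^sub>v v"
    using Ac unfolding eigenvector_def by auto
  have row: "(\<Sum>j<n. complex_of_real (A$$(i,j)) * v$j) = a * v$i" if "i < n" for i
  proof -
    have "(?Ac *\<^sub>v v) $ i = (a \<cdot>\<^sub>v v) $ i" using Av by simp
    then show ?thesis using that carrier v by (simp add: scalar_prod_def lessThan_atLeast0)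
  qed
  define s where "s = (\<Sum>i<n. \<Sum>j<n. complex_of_real (w i * A$$(i,j)) * cnj (v$i) * v$j)"
  define N where "N = (\<Sum>i<n. w i * (cmod (v$i))^2)"
  have "s = (\<Sum>i<n. complex_of_real (w i) * cnj (v$i) * (\<Sum>j<n. complex_of_real (A$$(i,j)) * v$j))"
    unfolding s_def by (simp add: sum_distrib_left ac_simps)
  also have "\<dots> = a * (\<Sum>i<n. complex_of_real (w i) * (cnj (v$i) * v$i))"
    using row by (simp add: sum_distrib_left ac_simps)
  also have "(\<Sum>i<n. complex_of_real (w i) * (cnj (v$i) * v$i)) = complex_of_real N"
    unfolding N_def cnj_mult_self by simp
  finally have s_eq: "s = a * complex_of_real N" .
  have "cnj s = (\<Sum>i<n. \<Sum>j<n. complex_of_real (w i * A$$(i,j)) * v$i * cnj (v$j))"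
    unfolding s_def by simp
  also have "\<dots> = (\<Sum>j<n. \<Sum>i<n. complex_of_real (w i * A$$(i,j)) * v$i * cnj (v$j))"
    by (rule sum.swap)
  also have "\<dots> = s"
    unfolding s_def using reversible by (intro sum.cong refl) (auto simp: ac_simps)
  finally have "Im s = 0" by (metis cnj.simps(2) complex_cnj_cancel_iff neg_equal_zero)
  moreover have "0 < N"
  proof -
    obtain i where i: "i < n" "v $ i \<noteq> 0"
      using v v0 by (metis carrier_vecD eq_vecI index_zero_vec(1) index_zero_vec(2))
    show ?thesis unfolding N_def
      by (rule sum_pos2[of _ i]) (use i weight_pos in \<open>auto simp: less_imp_le\<close>)
  qed
  ultimately show ?thesis using s_eq by simp
qed

lemma char_poly_splits: "\<exists>es. char_poly A = (\<Prod>e\<leftarrow>es. [:-e, 1:]) \<and> length es = n"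
proof -
  let ?Ac = "of_real_hom.mat_hom A :: complex mat"
  have Ac: "?Ac \<in> carrier_mat n n" using carrier by auto
  obtain as where cp: "char_poly ?Ac = (\<Prod>a\<leftarrow>as. [:-a, 1:])" and len: "length as = n"
    using char_poly_factorized[OF Ac] by blast
  have real: "Im a = 0" if "a \<in> set as" for a
  proof (rule complex_eigenvalue_real)
    have "poly (char_poly ?Ac) a = 0" unfolding cp using that by (rule linear_poly_root)
    then show "eigenvalue ?Ac a" using eigenvalue_root_char_poly[OF Ac] by simp
  qed
  define es where "es = map Re as"
  interpret of_real_poly: map_poly_inj_comm_ring_hom "of_real :: real \<Rightarrow> complex" ..
  have re: "map (\<lambda>x. [:- complex_of_real (Re x), 1:]) as = map (\<lambda>a. [:-a, 1:]) as"
    using real by (intro map_cong refl) (simp add: complex_eq_iff)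
  have "map_poly of_real (\<Prod>e\<leftarrow>es. [:-e, 1:]) = prod_list (map (\<lambda>x. [:- complex_of_real (Re x), 1:]) as)"
    unfolding es_def by (simp add: of_real_poly.hom_prod_list o_def)
  also have "\<dots> = (\<Prod>a\<leftarrow>as. [:-a, 1:])"
    by (simp only: re)
  also have "\<dots> = map_poly of_real (char_poly A)"
    unfolding cp[symmetric] by (rule of_real_hom.char_poly_hom[OF carrier])
  finally have "char_poly A = (\<Prod>e\<leftarrow>es. [:-e, 1:])"
    using of_real_poly.injectivity by metis
  then show ?thesis using len unfolding es_def by (metis length_map)
qed

end

section \<open>Reversible random walks\<close>

locale reversible_walk = reversible_matrix +
  assumes entries_nonneg: "\<And>i j. i < n \<Longrightarrow> j < n \<Longrightarrow> 0 \<le> A $$ (i,j)"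
    and row_sum: "\<And>i. i < n \<Longrightarrow> (\<Sum>j<n. A $$ (i,j)) = 1"
    and irreducible: "\<And>f i j. (\<And>i j. i < n \<Longrightarrow> j < n \<Longrightarrow> A $$ (i,j) \<noteq> 0 \<Longrightarrow> f i = (f j :: real))
                \<Longrightarrow> i < n \<Longrightarrow> j < n \<Longrightarrow> f i = f j"
    and dim_pos: "0 < n"
begin

abbreviation ones :: "nat \<Rightarrow> real" where "ones \<equiv> \<lambda>_. 1"

definition nontrivial_eigenvalue :: "real \<Rightarrow> bool" where
  "nontrivial_eigenvalue e \<longleftrightarrow> (\<exists>g. eigenfun g e \<and> inner_w g ones = 0)"

definition rayleigh_bound :: "real \<Rightarrow> bool" where
  "rayleigh_bound \<mu> \<longleftrightarrow> (\<forall>f. inner_w f ones = 0 \<longrightarrow> quad_form f \<le> \<mu> * inner_w f f)"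

lemma act_ones: "i < n \<Longrightarrow> act ones i = 1"
  unfolding act_def using row_sum by simp

lemma inner_w_ones_pos: "0 < inner_w ones ones"
  using inner_w_self_pos[of 0 ones] dim_pos by simp

lemma inner_w_act_ones: "inner_w (act f) ones = inner_w f ones"
proof -
  have "inner_w (act f) ones = inner_w (act ones) f"
    by (metis inner_w_act_commute inner_w_commute)
  also have "\<dots> = inner_w ones f" using act_ones by (intro inner_w_cong) auto
  finally show ?thesis by (simp add: inner_w_commute)
qed

lemma quad_form_ones: "quad_form ones = inner_w ones ones"
  unfolding quad_form_def using act_ones by (intro inner_w_cong) auto

lemma quad_form_null:
  assumes "inner_w f f = 0"
  shows "quad_form f = 0"
proof -
  have "quad_form f = quad_form (\<lambda>_. 0)"
    by (rule quad_form_cong) (use inner_w_self_eq_0D[OF assms] in auto)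
  then show ?thesis by (simp add: quad_form_def inner_w_def)
qed

lemma inner_w_minus_quad_form:
  "inner_w f f - quad_form f = (\<Sum>i<n. \<Sum>j<n. w i * A$$(i,j) * (f i - f j)^2) / 2"
proof -
  have rows: "(\<Sum>i<n. \<Sum>j<n. w i * A$$(i,j) * (f i)^2) = inner_w f f"
  proof -
    have "(\<Sum>i<n. \<Sum>j<n. w i * A$$(i,j) * (f i)^2) = (\<Sum>i<n. w i * (f i)^2 * (\<Sum>j<n. A$$(i,j)))"
      by (simp add: sum_distrib_left ac_simps)
    also have "\<dots> = inner_w f f"
      unfolding inner_w_def using row_sum by (intro sum.cong) (auto simp: power2_eq_square)
    finally show ?thesis .
  qed
  have cols: "(\<Sum>i<n. \<Sum>j<n. w i * A$$(i,j) * (f j)^2) = inner_w f f"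
  proof -
    have "(\<Sum>i<n. \<Sum>j<n. w i * A$$(i,j) * (f j)^2) = (\<Sum>j<n. \<Sum>i<n. w i * A$$(i,j) * (f j)^2)"
      by (rule sum.swap)
    also have "\<dots> = (\<Sum>j<n. \<Sum>i<n. w j * A$$(j,i) * (f j)^2)"
      using reversible by (intro sum.cong refl) auto
    finally show ?thesis using rows by simp
  qed
  have cross: "(\<Sum>i<n. \<Sum>j<n. w i * A$$(i,j) * (f i * f j)) = quad_form f"
    unfolding quad_form_def inner_w_def act_def
    by (simp add: sum_distrib_left sum_distrib_right ac_simps)
  have "(\<Sum>i<n. \<Sum>j<n. w i * A$$(i,j) * (f i - f j)^2) =
     (\<Sum>i<n. \<Sum>j<n. w i * A$$(i,j) * (f i)^2) + (\<Sum>i<n. \<Sum>j<n. w i * A$$(i,j) * (f j)^2)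
      - 2 * (\<Sum>i<n. \<Sum>j<n. w i * A$$(i,j) * (f i * f j))"
    by (simp add: power2_diff algebra_simps sum.distrib sum_subtractf sum_distrib_left)
  then show ?thesis using rows cols cross by simp
qed

lemma dirichlet_term_nonneg: "i < n \<Longrightarrow> j < n \<Longrightarrow> 0 \<le> w i * A$$(i,j) * (f i - f j)^2"
  using weight_pos[of i] entries_nonneg[of i j] by simp

lemma quad_form_le_inner_w: "quad_form f \<le> inner_w f f"
proof -
  have "0 \<le> (\<Sum>i<n. \<Sum>j<n. w i * A$$(i,j) * (f i - f j)^2)"
    using dirichlet_term_nonneg by (intro sum_nonneg) auto
  then show ?thesis using inner_w_minus_quad_form[of f] by simp
qed

lemma constant_if_quad_form_eq_inner_w:
  assumes "quad_form f = inner_w f f" and "i < n" and "j < n"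
  shows "f i = f j"
proof (rule irreducible[OF _ assms(2,3)])
  fix i j assume ij: "i < n" "j < n" "A $$ (i,j) \<noteq> 0"
  have "(\<Sum>i<n. \<Sum>j<n. w i * A$$(i,j) * (f i - f j)^2) = 0"
    using inner_w_minus_quad_form[of f] assms(1) by simp
  then have "(\<Sum>j<n. w i * A$$(i,j) * (f i - f j)^2) = 0"
    using ij by (subst (asm) sum_nonneg_eq_0_iff) (auto intro!: sum_nonneg dirichlet_term_nonneg)
  then have "w i * A$$(i,j) * (f i - f j)^2 = 0"
    using ij by (subst (asm) sum_nonneg_eq_0_iff) (auto intro!: dirichlet_term_nonneg)
  then show "f i = f j" using ij weight_pos[of i] by simp
qed

lemma nontrivial_eigenvalue_lt_1:
  assumes "nontrivial_eigenvalue e"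
  shows "e < 1"
proof -
  obtain g where ev: "eigenfun g e" and orth: "inner_w g ones = 0"
    using assms unfolding nontrivial_eigenvalue_def by blast
  obtain i0 where i0: "i0 < n" "g i0 \<noteq> 0" using ev unfolding eigenfun_def by blast
  have pos: "0 < inner_w g g" using inner_w_self_pos[of i0 g] i0 by blast
  have "e * inner_w g g \<le> 1 * inner_w g g"
    using quad_form_le_inner_w[of g] quad_form_eigenfun[OF ev] by simp
  then have "e \<le> 1" using pos by (simp add: mult_le_cancel_right)
  moreover have "e \<noteq> 1"
  proof
    assume "e = 1"
    then have "g i = g i0" if "i < n" for i
      using constant_if_quad_form_eq_inner_w quad_form_eigenfun[OF ev] that i0(1) by simp
    then have "inner_w g ones = inner_w (\<lambda>i. g i0 * ones i) ones"
      by (intro inner_w_cong) auto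
    then have "inner_w g ones = g i0 * inner_w ones ones" by (simp only: inner_w_scale_left)
    then show False using orth inner_w_ones_pos i0 by simp
  qed
  ultimately show ?thesis by simp
qed

text \<open>Splitting \<open>f\<close> into its mean and a part orthogonal to the constants.\<close>
lemma quad_form_le_shifted:
  assumes "rayleigh_bound \<mu>"
  shows "quad_form f \<le> \<mu> * inner_w f f + (1 - \<mu>) * (inner_w f ones)^2 / inner_w ones ones"
proof -
  define c where "c = inner_w f ones / inner_w ones ones"
  define h where "h = (\<lambda>i. f i + (-c) * ones i)"
  have h_orth: "inner_w h ones = 0"
    unfolding h_def inner_w_add_left c_def using inner_w_ones_pos by simp
  have f_eq: "f = (\<lambda>i. h i + c * ones i)" unfolding h_def by simp
  have "quad_form f = quad_form h + c^2 * inner_w ones ones"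
    unfolding f_eq quad_form_add using inner_w_act_ones[of h] h_orth quad_form_ones by simp
  moreover have "inner_w f f = inner_w h h + c^2 * inner_w ones ones"
    unfolding f_eq inner_w_self_add using h_orth by simp
  moreover have "quad_form h \<le> \<mu> * inner_w h h"
    using assms h_orth unfolding rayleigh_bound_def by blast
  ultimately have "quad_form f \<le> \<mu> * inner_w f f + (1 - \<mu>) * (c^2 * inner_w ones ones)"
    by (simp add: algebra_simps)
  also have "c^2 * inner_w ones ones = (inner_w f ones)^2 / inner_w ones ones"
    unfolding c_def using inner_w_ones_pos by (simp add: power2_eq_square)
  finally show ?thesis by simp
qed

subsection \<open>The variational characterisation of the nontrivial spectrum\<close>

text \<open>Functions are \<open>nat \<Rightarrow> real\<close>; those vanishing from \<open>n\<close> on represent \<open>\<real>\<^sup>n\<close>.\<close>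
definition orthogonal_unit_sphere :: "(nat \<Rightarrow> real) set" where
  "orthogonal_unit_sphere = {g. (\<forall>i\<ge>n. g i = 0) \<and> inner_w g g = 1 \<and> inner_w g ones = 0}"

definition normalize :: "(nat \<Rightarrow> real) \<Rightarrow> nat \<Rightarrow> real" where
  "normalize g i = (if i < n then (1 / sqrt (inner_w g g)) * g i else 0)"

lemma normalize_in_orthogonal_unit_sphere:
  assumes "inner_w g ones = 0" and "0 < inner_w g g"
  shows "normalize g \<in> orthogonal_unit_sphere"
proof -
  let ?c = "1 / sqrt (inner_w g g)"
  have "inner_w (normalize g) ones = ?c * inner_w g ones"
    unfolding normalize_def inner_w_scale_left[symmetric] by (intro inner_w_cong) auto
  moreover have "inner_w (normalize g) (normalize g) = ?c^2 * inner_w g g"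
    unfolding normalize_def inner_w_self_scale[symmetric] by (intro inner_w_cong) auto
  ultimately show ?thesis
    using assms unfolding orthogonal_unit_sphere_def by (simp add: power_divide normalize_def)
qed

lemma quad_form_normalize: "0 < inner_w g g \<Longrightarrow> quad_form (normalize g) = quad_form g / inner_w g g"
  using quad_form_cong[of "normalize g" "\<lambda>i. (1 / sqrt (inner_w g g)) * g i"]
  unfolding quad_form_scale by (simp add: normalize_def power_divide)

lemma compact_orthogonal_unit_sphere: "compact orthogonal_unit_sphere"
proof -
  let ?K = orthogonal_unit_sphere
  define R where "R = 1 + (\<Sum>i<n. 1 / w i)"
  define box where "box = Pi\<^sub>E UNIV (\<lambda>i. if i < n then {-R..R} else {0::real})"
  have sub: "?K \<subseteq> box"
  proof
    fix g assume "g \<in> ?K"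
    then have g: "\<forall>i\<ge>n. g i = 0" "inner_w g g = 1" unfolding orthogonal_unit_sphere_def by auto
    have "g i \<in> {-R..R}" if i: "i < n" for i
    proof -
      have "w i * g i * g i \<le> inner_w g g"
        unfolding inner_w_def using i inner_w_self_term_nonneg by (intro member_le_sum) auto
      then have "(g i)^2 \<le> 1 / w i"
        using g weight_pos[OF i] by (simp add: field_simps power2_eq_square)
      moreover have "1 / w i \<le> (\<Sum>i<n. 1 / w i)"
        using i weight_pos by (intro member_le_sum) (auto simp: less_imp_le)
      ultimately have "\<bar>g i\<bar> \<le> R" unfolding R_def using abs_le_1_plus_square[of "g i"] by linarith
      then show ?thesis by (simp add: abs_le_iff)
    qed
    then show "g \<in> box" using g unfolding box_def by auto
  qed
  have closed: "closed ?K"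
  proof -
    have "?K = (\<Inter>i\<in>{n..}. {g. g i = 0}) \<inter> {g. inner_w g g = 1} \<inter> {g. inner_w g ones = 0}"
      unfolding orthogonal_unit_sphere_def by auto
    moreover have "continuous_on UNIV (\<lambda>g. inner_w g h)" for h
      unfolding inner_w_def by (intro continuous_intros continuous_on_coordinate)
    moreover have "continuous_on UNIV (\<lambda>g. inner_w g g)"
      unfolding inner_w_def by (intro continuous_intros continuous_on_coordinate)
    ultimately show ?thesis
      by (auto intro!: closed_Int closed_INT closed_Collect_eq continuous_on_coordinate)
  qed
  have "compact (?K \<inter> box)"
    unfolding box_def by (rule closed_Int_compact[OF closed compact_box_fun])
  then show ?thesis using sub by (simp add: Int_absorb2)
qed

lemma exists_rayleigh_maximizer:
  assumes "inner_w f ones = 0" and "inner_w f f \<noteq> 0"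
  obtains g0 where "inner_w g0 g0 = 1" and "inner_w g0 ones = 0"
    and "\<And>g. inner_w g ones = 0 \<Longrightarrow> quad_form g \<le> quad_form g0 * inner_w g g"
proof -
  let ?K = orthogonal_unit_sphere
  have "?K \<noteq> {}"
    using normalize_in_orthogonal_unit_sphere[OF assms(1)] assms(2) inner_w_self_nonneg[of f] by force
  moreover have "continuous_on ?K quad_form"
    unfolding quad_form_def inner_w_def act_def by (intro continuous_intros continuous_on_coordinate)
  ultimately have "\<exists>g0\<in>?K. \<forall>g\<in>?K. quad_form g \<le> quad_form g0"
    by (intro continuous_attains_sup[OF compact_orthogonal_unit_sphere])
  then obtain g0 where g0: "g0 \<in> ?K" and max: "\<And>g. g \<in> ?K \<Longrightarrow> quad_form g \<le> quad_form g0"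
    by blast
  show ?thesis
  proof (rule that)
    show "inner_w g0 g0 = 1" "inner_w g0 ones = 0" using g0 unfolding orthogonal_unit_sphere_def by auto
    fix g assume g: "inner_w g ones = 0"
    show "quad_form g \<le> quad_form g0 * inner_w g g"
    proof (cases "inner_w g g = 0")
      case True then show ?thesis using quad_form_null by simp
    next
      case False
      then have pos: "0 < inner_w g g" using inner_w_self_nonneg[of g] by simp
      then show ?thesis
        using max[OF normalize_in_orthogonal_unit_sphere[OF g pos]] quad_form_normalize[OF pos]
        by (simp add: field_simps)
    qed
  qed
qed

text \<open>First variation: a maximiser of the Rayleigh quotient on the orthogonal complement of the
  constants is an eigenfunction, since \<open>A g\<^sub>0 - Q(g\<^sub>0) g\<^sub>0\<close> is orthogonal to that complement and
  (by \<open>inner_w_act_ones\<close>) to the constants.\<close>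
lemma rayleigh_maximizer_eigenfun:
  assumes unit: "inner_w g0 g0 = 1" and orth: "inner_w g0 ones = 0"
    and max: "\<And>g. inner_w g ones = 0 \<Longrightarrow> quad_form g \<le> quad_form g0 * inner_w g g"
  shows "eigenfun g0 (quad_form g0)"
proof -
  let ?M = "quad_form g0"
  have first_variation: "inner_w (act g0) h = ?M * inner_w g0 h" if h: "inner_w h ones = 0" for h
  proof -
    have "2 * (inner_w (act g0) h - ?M * inner_w g0 h) = 0"
    proof (rule linear_coeff_zero_if_quadratic_nonpos)
      fix t
      have "inner_w (\<lambda>i. g0 i + t * h i) ones = 0" unfolding inner_w_add_left using orth h by simp
      then have "quad_form (\<lambda>i. g0 i + t * h i)
          \<le> ?M * inner_w (\<lambda>i. g0 i + t * h i) (\<lambda>i. g0 i + t * h i)"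
        by (rule max)
      then show "2 * (inner_w (act g0) h - ?M * inner_w g0 h) * t
          + (quad_form h - ?M * inner_w h h) * t^2 \<le> 0"
        unfolding quad_form_add inner_w_self_add unit by (simp add: algebra_simps)
    qed
    then show ?thesis by simp
  qed
  define r where "r = (\<lambda>i. act g0 i + (- ?M) * g0 i)"
  have "inner_w r ones = 0" unfolding r_def inner_w_add_left inner_w_act_ones using orth by simp
  moreover have "inner_w r r = inner_w (act g0) r + (- ?M) * inner_w g0 r"
    unfolding r_def[of] by (simp only: inner_w_add_left)
  ultimately have "inner_w r r = 0" using first_variation by simp
  then have "act g0 i = ?M * g0 i" if "i < n" for i
    using inner_w_self_eq_0D[of r i] that unfolding r_def by simp
  moreover have "\<exists>i<n. g0 i \<noteq> 0"
  proof (rule ccontr)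
    assume "\<not> (\<exists>i<n. g0 i \<noteq> 0)"
    then have "inner_w g0 g0 = 0" unfolding inner_w_def by simp
    then show False using unit by simp
  qed
  ultimately show ?thesis unfolding eigenfun_def by blast
qed

lemma rayleigh_bound_iff: "rayleigh_bound \<mu> \<longleftrightarrow> (\<forall>e. nontrivial_eigenvalue e \<longrightarrow> e \<le> \<mu>)"
proof safe
  fix e assume bound: "rayleigh_bound \<mu>" and "nontrivial_eigenvalue e"
  then obtain g where ev: "eigenfun g e" and orth: "inner_w g ones = 0"
    unfolding nontrivial_eigenvalue_def by blast
  obtain i0 where "i0 < n" "g i0 \<noteq> 0" using ev unfolding eigenfun_def by blast
  then have "0 < inner_w g g" by (rule inner_w_self_pos)
  moreover have "e * inner_w g g \<le> \<mu> * inner_w g g"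
    using bound orth quad_form_eigenfun[OF ev] unfolding rayleigh_bound_def by metis
  ultimately show "e \<le> \<mu>" by (simp add: mult_le_cancel_right)
next
  assume eigs: "\<forall>e. nontrivial_eigenvalue e \<longrightarrow> e \<le> \<mu>"
  show "rayleigh_bound \<mu>" unfolding rayleigh_bound_def
  proof safe
    fix f assume f: "inner_w f ones = 0"
    show "quad_form f \<le> \<mu> * inner_w f f"
    proof (cases "inner_w f f = 0")
      case True then show ?thesis using quad_form_null by simp
    next
      case False
      obtain g0 where g0: "inner_w g0 g0 = 1" "inner_w g0 ones = 0"
        and max: "\<And>g. inner_w g ones = 0 \<Longrightarrow> quad_form g \<le> quad_form g0 * inner_w g g"
        using exists_rayleigh_maximizer[OF f False] by blast
      have "nontrivial_eigenvalue (quad_form g0)"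
        unfolding nontrivial_eigenvalue_def using rayleigh_maximizer_eigenfun[OF g0 max] g0 by blast
      then have "quad_form g0 * inner_w f f \<le> \<mu> * inner_w f f"
        using eigs inner_w_self_nonneg by (simp add: mult_right_mono)
      then show ?thesis using max[OF f] by simp
    qed
  qed
qed

text \<open>An eigenfunction \<open>g \<perp> 1\<close> with eigenvalue \<open>e\<close> turns the hypothesis into
  \<open>e \<le> \<mu> + (1 - \<mu>) e\<^sup>2\<close>, i.e. \<open>(1 - e) (\<mu> - (1 - \<mu>) e) \<ge> 0\<close>; and \<open>e < 1\<close>.\<close>
lemma rayleigh_bound_of_local_inequality:
  assumes local: "\<And>g. quad_form g \<le> \<mu> * inner_w g g + (1 - \<mu>) * inner_w (act g) (act g)"
    and "\<mu> < 1"
  shows "rayleigh_bound (\<mu> / (1 - \<mu>))"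
  unfolding rayleigh_bound_iff
proof safe
  fix e assume e: "nontrivial_eigenvalue e"
  then obtain g where ev: "eigenfun g e" unfolding nontrivial_eigenvalue_def by blast
  obtain i0 where "i0 < n" "g i0 \<noteq> 0" using ev unfolding eigenfun_def by blast
  then have pos: "0 < inner_w g g" by (rule inner_w_self_pos)
  have "inner_w (act g) (act g) = inner_w (\<lambda>i. e * g i) (\<lambda>i. e * g i)"
    using ev unfolding eigenfun_def by (intro inner_w_cong) auto
  then have "e * inner_w g g \<le> (\<mu> + (1 - \<mu>) * e^2) * inner_w g g"
    using local[of g] quad_form_eigenfun[OF ev] by (simp add: inner_w_self_scale algebra_simps)
  then have "e \<le> \<mu> + (1 - \<mu>) * e^2" using pos by (simp add: mult_le_cancel_right)
  then have "0 \<le> (1 - e) * (\<mu> - (1 - \<mu>) * e)" by (simp add: algebra_simps power2_eq_square)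
  then have "0 \<le> \<mu> - (1 - \<mu>) * e"
    using nontrivial_eigenvalue_lt_1[OF e] by (simp add: zero_le_mult_iff)
  then show "e \<le> \<mu> / (1 - \<mu>)" using \<open>\<mu> < 1\<close> by (simp add: field_simps)
qed

subsection \<open>Splitting off the eigenvalue 1\<close>

text \<open>Column 0 of \<open>basis_mat\<close> is the constant function and column \<open>j > 0\<close> is
  \<open>e\<^sub>j - (w\<^sub>j / w\<^sub>0) e\<^sub>0\<close>, which is orthogonal to the constants. In this basis \<open>A\<close> is block
  upper triangular with the \<open>1 \<times> 1\<close> block \<open>1\<close>, and the remaining block \<open>reduced_mat\<close> acts on
  the orthogonal complement of the constants.\<close>
definition basis_mat :: "real mat" where
  "basis_mat = mat n n (\<lambda>(i,j). if j = 0 \<or> i = j then 1 else if i = 0 then - w j / w 0 else 0)"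

definition basis_mat_inv :: "real mat" where
  "basis_mat_inv = mat n n (\<lambda>(i,j).
     if i = 0 then w j / inner_w ones ones else (if i = j then 1 else 0) - w j / inner_w ones ones)"

definition A_in_basis :: "real mat" where
  "A_in_basis = basis_mat_inv * A * basis_mat"

definition reduced_mat :: "real mat" where
  "reduced_mat = mat (n - 1) (n - 1) (\<lambda>(i,j). A_in_basis $$ (i + 1, j + 1))"

lemma basis_mat_carrier: "basis_mat \<in> carrier_mat n n"
  and basis_mat_inv_carrier: "basis_mat_inv \<in> carrier_mat n n"
  and A_in_basis_carrier: "A_in_basis \<in> carrier_mat n n"
  unfolding basis_mat_def basis_mat_inv_def A_in_basis_def using carrier by auto

lemma weighted_col_sum_basis_mat:
  assumes "j < n"
  shows "(\<Sum>k<n. w k * basis_mat $$ (k,j)) = (if j = 0 then inner_w ones ones else 0)"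
proof (cases "j = 0")
  case True
  then show ?thesis using assms unfolding basis_mat_def inner_w_def by simp
next
  case False
  have "(\<Sum>k<n. w k * basis_mat $$ (k,j)) = (\<Sum>k<n. (if k = j then w j else 0) + (if k = 0 then - w j else 0))"
    using False assms weight_pos[OF dim_pos] by (intro sum.cong refl) (simp add: basis_mat_def)
  also have "\<dots> = 0" using assms dim_pos by (simp add: sum.distrib)
  finally show ?thesis using False by simp
qed

lemma basis_mat_inv_mult: "basis_mat_inv * basis_mat = 1\<^sub>m n"
proof (rule eq_matI)
  fix i j assume "i < dim_row (1\<^sub>m n)" "j < dim_col (1\<^sub>m n)"
  then have i: "i < n" and j: "j < n" by auto
  let ?Z = "inner_w ones ones"
  have prod: "(basis_mat_inv * basis_mat) $$ (i,j) = (\<Sum>k<n. basis_mat_inv $$ (i,k) * basis_mat $$ (k,j))"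
    by (rule index_mult_mat_sum[OF basis_mat_inv_carrier basis_mat_carrier i j])
  show "(basis_mat_inv * basis_mat) $$ (i,j) = 1\<^sub>m n $$ (i,j)"
  proof (cases "i = 0")
    case True
    have "(\<Sum>k<n. basis_mat_inv $$ (i,k) * basis_mat $$ (k,j)) = (\<Sum>k<n. w k * basis_mat $$ (k,j)) / ?Z"
      using True i by (simp add: basis_mat_inv_def sum_divide_distrib)
    then show ?thesis using prod weighted_col_sum_basis_mat[OF j] inner_w_ones_pos True i j by auto
  next
    case False
    have "(\<Sum>k<n. basis_mat_inv $$ (i,k) * basis_mat $$ (k,j))
        = (\<Sum>k<n. (if i = k then basis_mat $$ (k,j) else 0) - w k * basis_mat $$ (k,j) / ?Z)"
      using False i by (intro sum.cong refl) (simp add: basis_mat_inv_def algebra_simps)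
    also have "\<dots> = basis_mat $$ (i,j) - (\<Sum>k<n. w k * basis_mat $$ (k,j)) / ?Z"
      using i by (simp add: sum_subtractf sum_divide_distrib)
    finally show ?thesis
      using prod weighted_col_sum_basis_mat[OF j] False i j inner_w_ones_pos
      by (simp add: basis_mat_def)
  qed
qed (use basis_mat_carrier basis_mat_inv_carrier in auto)

lemma basis_mat_mult_inv: "basis_mat * basis_mat_inv = 1\<^sub>m n"
  by (rule mat_mult_left_right_inverse[OF basis_mat_inv_carrier basis_mat_carrier basis_mat_inv_mult])

lemma A_in_basis_col_0:
  assumes "i < n"
  shows "A_in_basis $$ (i,0) = (if i = 0 then 1 else 0)"
proof -
  have AW: "A * basis_mat \<in> carrier_mat n n" using carrier basis_mat_carrier by auto
  have AW_col_0: "(A * basis_mat) $$ (k,0) = 1" if "k < n" for k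
    unfolding index_mult_mat_sum[OF carrier basis_mat_carrier that dim_pos]
    using row_sum[OF that] by (simp add: basis_mat_def)
  have "A_in_basis $$ (i,0) = (\<Sum>k<n. basis_mat_inv $$ (i,k))"
    unfolding A_in_basis_def assoc_mult_mat[OF basis_mat_inv_carrier carrier basis_mat_carrier]
      index_mult_mat_sum[OF basis_mat_inv_carrier AW assms dim_pos]
    using AW_col_0 by simp
  also have "\<dots> = (if i = 0 then 1 else 0)"
    using assms inner_w_ones_pos
    by (auto simp: basis_mat_inv_def sum_subtractf sum_divide_distrib[symmetric] inner_w_def)
  finally show ?thesis .
qed

lemma char_poly_eq_reduced: "char_poly A = [:-1, 1:] * char_poly reduced_mat"
proof -
  obtain n' where n: "n = Suc n'" using dim_pos by (cases n) auto
  obtain B1 B2 B0 B3 where split: "split_block A_in_basis 1 1 = (B1, B2, B0, B3)"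
    by (cases "split_block A_in_basis 1 1") auto
  have dims: "dim_row A_in_basis = 1 + n'" "dim_col A_in_basis = 1 + n'"
    using A_in_basis_carrier n by auto
  note blocks = split_block[OF split dims]
  have B1: "B1 = mat 1 1 (\<lambda>_. 1)" and B0: "B0 = 0\<^sub>m n' 1" and B3: "B3 = reduced_mat"
    using split A_in_basis_col_0 dims n unfolding split_block_def Let_def reduced_mat_def
    by (auto intro!: eq_matI)
  have "similar_mat A_in_basis A"
    unfolding similar_mat_def similar_mat_wit_def Let_def A_in_basis_def
    using carrier basis_mat_carrier basis_mat_inv_carrier basis_mat_inv_mult basis_mat_mult_inv
    by (intro exI[of _ basis_mat_inv] exI[of _ basis_mat]) auto
  then have "char_poly A = char_poly A_in_basis" by (simp add: char_poly_similar)
  also have "\<dots> = char_poly B1 * char_poly B3"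
    using blocks(5) char_poly_four_block_zeros_col[OF blocks(1,2,4)] B0 by simp
  finally show ?thesis unfolding B1 B3 by (simp add: char_poly_defs det_def sign_def)
qed

lemma act_basis_mat_vec:
  assumes v: "v \<in> carrier_vec n" and i: "i < n"
  shows "act (\<lambda>j. (basis_mat *\<^sub>v v) $ j) i = (basis_mat *\<^sub>v (A_in_basis *\<^sub>v v)) $ i"
proof -
  have "basis_mat * A_in_basis = (basis_mat * basis_mat_inv) * A * basis_mat"
    unfolding A_in_basis_def using carrier basis_mat_carrier basis_mat_inv_carrier
    by (simp add: assoc_mult_mat[of _ n n _ n _ n])
  then have commute: "A * basis_mat = basis_mat * A_in_basis"
    using basis_mat_mult_inv carrier basis_mat_carrier by simp
  have Wv: "basis_mat *\<^sub>v v \<in> carrier_vec n" using basis_mat_carrier v by simp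
  have "act (\<lambda>j. (basis_mat *\<^sub>v v) $ j) i = (A *\<^sub>v (basis_mat *\<^sub>v v)) $ i"
    by (rule mult_mat_vec_eq_act[OF Wv i, symmetric])
  also have "A *\<^sub>v (basis_mat *\<^sub>v v) = (A * basis_mat) *\<^sub>v v"
    by (rule assoc_mult_mat_vec[symmetric, OF carrier basis_mat_carrier v])
  also have "\<dots> = basis_mat *\<^sub>v (A_in_basis *\<^sub>v v)"
    unfolding commute by (rule assoc_mult_mat_vec[OF basis_mat_carrier A_in_basis_carrier v])
  finally show ?thesis .
qed

lemma inner_w_basis_mat_vec_ones:
  assumes v: "v \<in> carrier_vec n"
  shows "inner_w (\<lambda>i. (basis_mat *\<^sub>v v) $ i) ones = v $ 0 * inner_w ones ones"
proof -
  have "inner_w (\<lambda>i. (basis_mat *\<^sub>v v) $ i) ones = (\<Sum>i<n. \<Sum>k<n. w i * basis_mat $$ (i,k) * v $ k)"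
    unfolding inner_w_def using index_mult_mat_vec_sum[OF basis_mat_carrier v]
    by (simp add: sum_distrib_left mult.assoc)
  also have "\<dots> = (\<Sum>k<n. v $ k * (\<Sum>i<n. w i * basis_mat $$ (i,k)))"
    by (subst sum.swap) (simp add: sum_distrib_left ac_simps)
  also have "\<dots> = (\<Sum>k<n. if k = 0 then v $ 0 * inner_w ones ones else 0)"
    using weighted_col_sum_basis_mat by (intro sum.cong refl) simp
  also have "\<dots> = v $ 0 * inner_w ones ones" using dim_pos by simp
  finally show ?thesis .
qed

definition zero_extend :: "real vec \<Rightarrow> real vec" where
  "zero_extend y = vec n (\<lambda>i. if i = 0 then 0 else y $ (i - 1))"

lemma A_in_basis_mult_zero_extend:
  assumes y: "y \<in> carrier_vec (n - 1)" and ev: "reduced_mat *\<^sub>v y = e \<cdot>\<^sub>v y"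
  shows "A_in_basis *\<^sub>v zero_extend y
    = e \<cdot>\<^sub>v zero_extend y + (A_in_basis *\<^sub>v zero_extend y) $ 0 \<cdot>\<^sub>v unit_vec n 0"
proof (rule eq_vecI)
  let ?v = "zero_extend y"
  have v: "?v \<in> carrier_vec n" unfolding zero_extend_def by simp
  fix k assume "k < dim_vec (e \<cdot>\<^sub>v ?v + (A_in_basis *\<^sub>v ?v) $ 0 \<cdot>\<^sub>v unit_vec n 0)"
  then have k: "k < n" by simp
  show "(A_in_basis *\<^sub>v ?v) $ k = (e \<cdot>\<^sub>v ?v + (A_in_basis *\<^sub>v ?v) $ 0 \<cdot>\<^sub>v unit_vec n 0) $ k"
  proof (cases k)
    case 0 then show ?thesis using k unfolding zero_extend_def by simp
  next
    case (Suc k')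
    have "(A_in_basis *\<^sub>v ?v) $ k = (\<Sum>j<n. A_in_basis $$ (k,j) * (if j = 0 then 0 else y $ (j - 1)))"
      unfolding index_mult_mat_vec_sum[OF A_in_basis_carrier v k] by (simp add: zero_extend_def)
    also have "{..<n} = {..<Suc (n - 1)}" using dim_pos by simp
    also have "(\<Sum>j<Suc (n - 1). A_in_basis $$ (k,j) * (if j = 0 then 0 else y $ (j - 1)))
        = (\<Sum>j<n - 1. A_in_basis $$ (k, j + 1) * y $ j)"
      unfolding sum.lessThan_Suc_shift by simp
    also have "\<dots> = (reduced_mat *\<^sub>v y) $ k'"
      using k Suc y by (simp add: reduced_mat_def scalar_prod_def lessThan_atLeast0)
    finally show ?thesis using y ev k Suc unfolding zero_extend_def by simp
  qed
qed (simp_all add: zero_extend_def A_in_basis_carrier[THEN carrier_matD(1)])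

lemma basis_mat_mult_vec_eq_0D:
  assumes v: "v \<in> carrier_vec n" and "basis_mat *\<^sub>v v = 0\<^sub>v n"
  shows "v = 0\<^sub>v n"
proof -
  have "v = basis_mat_inv *\<^sub>v (basis_mat *\<^sub>v v)"
    using assoc_mult_mat_vec[OF basis_mat_inv_carrier basis_mat_carrier v] basis_mat_inv_mult v by simp
  also have "\<dots> = 0\<^sub>v n"
    unfolding assms(2) using basis_mat_inv_carrier by (intro eq_vecI) auto
  finally show ?thesis .
qed

text \<open>An eigenvector \<open>y\<close> of \<open>reduced_mat\<close> gives \<open>g = basis_mat (0, y)\<close>, which is orthogonal
  to the constants and satisfies \<open>A g = e g + c\<close>; pairing with the constants forces \<open>c = 0\<close>.\<close>
lemma eigenvalue_reduced_mat_nontrivial: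
  assumes "eigenvalue reduced_mat e"
  shows "nontrivial_eigenvalue e"
proof -
  have "reduced_mat \<in> carrier_mat (n - 1) (n - 1)" unfolding reduced_mat_def by simp
  then obtain y where y: "y \<in> carrier_vec (n - 1)" "y \<noteq> 0\<^sub>v (n - 1)" "reduced_mat *\<^sub>v y = e \<cdot>\<^sub>v y"
    using assms unfolding eigenvalue_def eigenvector_def by auto
  define v where "v = zero_extend y"
  have v: "v \<in> carrier_vec n" unfolding v_def zero_extend_def by simp
  define c where "c = (A_in_basis *\<^sub>v v) $ 0"
  define g where "g = (\<lambda>i. (basis_mat *\<^sub>v v) $ i)"
  have Av: "A_in_basis *\<^sub>v v = e \<cdot>\<^sub>v v + c \<cdot>\<^sub>v unit_vec n 0"
    unfolding c_def v_def by (rule A_in_basis_mult_zero_extend[OF y(1,3)])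
  have basis_unit: "(basis_mat *\<^sub>v unit_vec n 0) $ i = 1" if "i < n" for i
    using that dim_pos basis_mat_carrier by (simp add: basis_mat_def)
  have act_g: "act g i = e * g i + c" if "i < n" for i
    using act_basis_mat_vec[OF v that] that v basis_unit[OF that] basis_mat_carrier
    unfolding g_def Av by (simp add: mult_add_distrib_mat_vec[of _ n n] mult_mat_vec)
  have orth: "inner_w g ones = 0"
    unfolding g_def inner_w_basis_mat_vec_ones[OF v] using dim_pos by (simp add: v_def zero_extend_def)
  have "inner_w (act g) ones = inner_w (\<lambda>i. e * g i + c * ones i) ones"
    using act_g by (intro inner_w_cong) auto
  also have "\<dots> = e * inner_w g ones + c * inner_w ones ones"
    by (simp only: inner_w_add_left inner_w_scale_left)
  finally have "c * inner_w ones ones = 0" using orth inner_w_act_ones[of g] by simp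
  then have "\<forall>i<n. act g i = e * g i" using act_g inner_w_ones_pos by simp
  moreover have "\<exists>i<n. g i \<noteq> 0"
  proof (rule ccontr)
    assume "\<not> (\<exists>i<n. g i \<noteq> 0)"
    then have "basis_mat *\<^sub>v v = 0\<^sub>v n"
      using basis_mat_carrier unfolding g_def by (intro eq_vecI) auto
    then have "v = 0\<^sub>v n" by (rule basis_mat_mult_vec_eq_0D[OF v])
    then have "y = 0\<^sub>v (n - 1)"
      using y(1) by (intro eq_vecI) (auto simp: v_def zero_extend_def vec_eq_iff dest!: spec[of _ "Suc _"])
    then show False using y(2) by simp
  qed
  ultimately show ?thesis unfolding nontrivial_eigenvalue_def eigenfun_def using orth by blast
qed

lemma char_poly_nonzero: "char_poly A \<noteq> 0"
  using degree_monic_char_poly[OF carrier] by auto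

lemma proots_char_poly_split:
  obtains M where "proots (char_poly A) = add_mset 1 M" and "size M = n - 1"
    and "\<And>e. e \<in># M \<Longrightarrow> nontrivial_eigenvalue e"
proof
  let ?M = "proots (char_poly reduced_mat)"
  have "char_poly reduced_mat \<noteq> 0" using char_poly_nonzero unfolding char_poly_eq_reduced by auto
  then have "proots ([:-1, 1:] * char_poly reduced_mat) = proots [:-1, 1:] + ?M"
    by (intro proots_mult) auto
  then show split: "proots (char_poly A) = add_mset 1 ?M"
    unfolding char_poly_eq_reduced by (simp add: proots_linear_factor)
  obtain es where "char_poly A = (\<Prod>e\<leftarrow>es. [:-e, 1:])" "length es = n"
    using char_poly_splits by blast
  then have "size (proots (char_poly A)) = n" by (simp add: proots_prod_linear_factors)
  then show "size ?M = n - 1" unfolding split by simp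
  fix e assume "e \<in># ?M"
  then have "poly (char_poly reduced_mat) e = 0"
    using \<open>char_poly reduced_mat \<noteq> 0\<close> by simp
  then have "eigenvalue reduced_mat e"
    using eigenvalue_root_char_poly[of reduced_mat "n - 1"] by (simp add: reduced_mat_def)
  then show "nontrivial_eigenvalue e" by (rule eigenvalue_reduced_mat_nontrivial)
qed

definition second_eigenvalue :: real where
  "second_eigenvalue = rev (sorted_list_of_multiset (proots (char_poly A))) ! 1"

lemma second_eigenvalue_le_iff_rayleigh_bound:
  assumes "2 \<le> n"
  shows "second_eigenvalue \<le> \<mu> \<longleftrightarrow> rayleigh_bound \<mu>"
proof -
  obtain M where split: "proots (char_poly A) = add_mset 1 M" and "size M = n - 1"
    and nontrivial: "\<And>e. e \<in># M \<Longrightarrow> nontrivial_eigenvalue e"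
    using proots_char_poly_split by blast
  then have "M \<noteq> {#}" using assms by auto
  moreover have "\<forall>e\<in>#M. e < 1" using nontrivial nontrivial_eigenvalue_lt_1 by blast
  ultimately have in_M: "second_eigenvalue \<in># M" and max: "\<And>e. e \<in># M \<Longrightarrow> e \<le> second_eigenvalue"
    unfolding second_eigenvalue_def split by (rule second_largest_add_mset)+
  have "nontrivial_eigenvalue e \<longleftrightarrow> e \<in># M" for e
  proof
    assume e: "nontrivial_eigenvalue e"
    then obtain g where "eigenfun g e" unfolding nontrivial_eigenvalue_def by blast
    then have "e \<in># proots (char_poly A)"
      using eigenfun_root_char_poly char_poly_nonzero by (auto simp: set_count_proots)
    then show "e \<in># M" using split nontrivial_eigenvalue_lt_1[OF e] by auto
  qed (rule nontrivial)
  then show ?thesis unfolding rayleigh_bound_iff using in_M max by (meson order.trans)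
qed

end

section \<open>Weighted pure complexes and Garland's identities\<close>

locale weighted_pure_complex =
  fixes X :: "'a set set" and d :: nat and P :: "'a set \<Rightarrow> real"
  assumes weighted: "weighted_complex X d P"
begin

text \<open>\<open>mass \<eta>\<close> is the total \<open>\<Pi>\<close>-weight of the top faces containing \<open>\<eta>\<close>, so that
  \<open>w(\<eta>) = mass \<eta> / binom(d+1, |\<eta>|)\<close>.\<close>
definition mass :: "'a set \<Rightarrow> real" where
  "mass \<eta> = (\<Sum>\<sigma>\<in>{\<sigma>\<in>top_faces X d. \<eta> \<subseteq> \<sigma>}. P \<sigma>)"

definition ground :: "'a set" where
  "ground = \<Union>X"

lemma pure: "pure_complex X d"
  using weighted unfolding weighted_complex_def by simp

lemma finite_complex: "finite X"
  using pure unfolding pure_complex_def by blast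

lemma finite_face: "\<sigma> \<in> X \<Longrightarrow> finite \<sigma>"
  using pure unfolding pure_complex_def by auto

lemma face_subset_closed: "\<sigma> \<in> X \<Longrightarrow> \<tau> \<subseteq> \<sigma> \<Longrightarrow> \<tau> \<in> X"
  using pure unfolding pure_complex_def by blast

lemma exists_top_face: "\<sigma> \<in> X \<Longrightarrow> \<exists>\<eta>\<in>top_faces X d. \<sigma> \<subseteq> \<eta>"
  using pure unfolding pure_complex_def top_faces_def by blast

lemma top_faces_subset: "top_faces X d \<subseteq> X"
  and card_top_face: "\<sigma> \<in> top_faces X d \<Longrightarrow> card \<sigma> = d + 1"
  unfolding top_faces_def by auto

lemma finite_top_faces: "finite (top_faces X d)"
  using finite_complex top_faces_subset finite_subset by blast

lemma top_weight_pos: "\<sigma> \<in> top_faces X d \<Longrightarrow> 0 < P \<sigma>"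
  using weighted unfolding weighted_complex_def by simp

lemma finite_ground: "finite ground"
  unfolding ground_def using finite_complex finite_face by blast

lemma face_subset_ground: "\<sigma> \<in> X \<Longrightarrow> \<sigma> \<subseteq> ground"
  unfolding ground_def by blast

lemma mass_nonneg: "0 \<le> mass \<eta>"
  unfolding mass_def using top_weight_pos by (intro sum_nonneg) (auto simp: less_imp_le)

lemma mass_antimono: "\<eta> \<subseteq> \<eta>' \<Longrightarrow> mass \<eta>' \<le> mass \<eta>"
  unfolding mass_def using top_weight_pos finite_top_faces
  by (intro sum_mono2) (auto simp: less_imp_le)

lemma mass_pos: "\<tau> \<in> X \<Longrightarrow> 0 < mass \<tau>"
proof -
  assume "\<tau> \<in> X"
  then obtain \<eta> where "\<eta> \<in> top_faces X d" "\<tau> \<subseteq> \<eta>" using exists_top_face by blast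
  then show ?thesis unfolding mass_def
    by (intro sum_pos2[of _ \<eta>]) (use top_weight_pos finite_top_faces in \<open>auto simp: less_imp_le\<close>)
qed

lemma mass_eq_0: "\<eta> \<notin> X \<Longrightarrow> mass \<eta> = 0"
proof -
  assume "\<eta> \<notin> X"
  then have none: "{\<sigma>\<in>top_faces X d. \<eta> \<subseteq> \<sigma>} = {}"
    using top_faces_subset face_subset_closed by blast
  show ?thesis unfolding mass_def none by simp
qed

lemma mass_insert_eq_0: "mass \<eta> = 0 \<Longrightarrow> mass (insert x \<eta>) = 0"
  using mass_antimono[of \<eta> "insert x \<eta>"] mass_nonneg[of "insert x \<eta>"] by auto

text \<open>Double counting: every top face \<open>\<sigma> \<supseteq> \<eta>\<close> has \<open>d + 1 - |\<eta>|\<close> vertices outside \<open>\<eta>\<close>.\<close>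
lemma sum_mass_insert:
  assumes "finite \<eta>"
  shows "(\<Sum>x\<in>ground - \<eta>. mass (insert x \<eta>)) = real (d + 1 - card \<eta>) * mass \<eta>"
proof -
  let ?T = "{\<sigma>\<in>top_faces X d. \<eta> \<subseteq> \<sigma>}"
  have "(\<Sum>x\<in>ground - \<eta>. mass (insert x \<eta>)) = (\<Sum>x\<in>ground - \<eta>. \<Sum>\<sigma>\<in>?T. if x \<in> \<sigma> then P \<sigma> else 0)"
  proof (intro sum.cong refl)
    fix x
    have "{\<sigma>\<in>top_faces X d. insert x \<eta> \<subseteq> \<sigma>} = {\<sigma>\<in>?T. x \<in> \<sigma>}" by auto
    then have "mass (insert x \<eta>) = (\<Sum>\<sigma>\<in>{\<sigma>\<in>?T. x \<in> \<sigma>}. P \<sigma>)" unfolding mass_def by simp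
    also have "\<dots> = (\<Sum>\<sigma>\<in>?T. if x \<in> \<sigma> then P \<sigma> else 0)"
      by (rule sum.inter_filter) (use finite_top_faces in simp)
    finally show "mass (insert x \<eta>) = (\<Sum>\<sigma>\<in>?T. if x \<in> \<sigma> then P \<sigma> else 0)" .
  qed
  also have "\<dots> = (\<Sum>\<sigma>\<in>?T. \<Sum>x\<in>ground - \<eta>. if x \<in> \<sigma> then P \<sigma> else 0)"
    by (rule sum.swap)
  also have "\<dots> = (\<Sum>\<sigma>\<in>?T. real (d + 1 - card \<eta>) * P \<sigma>)"
  proof (intro sum.cong refl)
    fix \<sigma> assume \<sigma>: "\<sigma> \<in> ?T"
    then have "(ground - \<eta>) \<inter> \<sigma> = \<sigma> - \<eta>"
      using top_faces_subset face_subset_ground by blast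
    moreover have "card (\<sigma> - \<eta>) = d + 1 - card \<eta>"
      using \<sigma> assms card_top_face by (simp add: card_Diff_subset)
    ultimately show "(\<Sum>x\<in>ground - \<eta>. if x \<in> \<sigma> then P \<sigma> else 0) = real (d + 1 - card \<eta>) * P \<sigma>"
      using finite_ground by (simp add: sum.inter_restrict[symmetric])
  qed
  finally show ?thesis unfolding mass_def by (simp add: sum_distrib_left)
qed

lemma sum_mass_insert_outside:
  assumes "finite \<eta>" and "\<tau> \<subseteq> \<eta>"
  shows "(\<Sum>x\<in>ground - \<tau>. if x \<in> \<eta> then 0 else mass (insert x \<eta>)) = real (d + 1 - card \<eta>) * mass \<eta>"
proof -
  have "(\<Sum>x\<in>ground - \<tau>. if x \<in> \<eta> then 0 else mass (insert x \<eta>)) = (\<Sum>x\<in>ground - \<eta>. mass (insert x \<eta>))"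
    using finite_ground assms(2) by (intro sum.mono_neutral_cong_right) auto
  then show ?thesis using sum_mass_insert[OF assms(1)] by simp
qed

lemma sum_ground_minus_insert:
  assumes "x \<in> ground - \<tau>"
  shows "(\<Sum>u\<in>ground - insert x \<tau>. g u) = (\<Sum>u\<in>ground - \<tau>. if u = x then 0 else g u)"
proof -
  have "ground - insert x \<tau> = (ground - \<tau>) - {x}" by auto
  then show ?thesis using sum_skip_point[of "ground - \<tau>" x g] finite_ground by simp
qed

subsection \<open>The walk on a link in global coordinates\<close>

text \<open>For a face \<open>\<tau>\<close> with link of dimension \<open>k = d - |\<tau>|\<close>, the link's vertex weights are
  proportional to \<open>mass (insert v \<tau>)\<close>, its edge weights to \<open>mass (insert u (insert v \<tau>))\<close>,
  and its adjacency operator is \<open>link_walk \<tau>\<close>. A function on the link is any \<open>f :: 'a \<Rightarrow> real\<close>;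
  vertices of \<open>ground - \<tau>\<close> outside the link carry mass 0, so all sums may range over
  \<open>ground - \<tau>\<close>. \<open>link_form \<tau> f\<close> is \<open>k\<close> times the (unnormalised) quadratic form of the walk.\<close>
definition link_dim :: "'a set \<Rightarrow> real" where
  "link_dim \<tau> = real (d - card \<tau>)"

definition edge_mass :: "'a set \<Rightarrow> 'a \<Rightarrow> 'a \<Rightarrow> real" where
  "edge_mass \<tau> u v = (if u = v then 0 else mass (insert u (insert v \<tau>)))"

definition link_sq_norm :: "'a set \<Rightarrow> ('a \<Rightarrow> real) \<Rightarrow> real" where
  "link_sq_norm \<tau> f = (\<Sum>v\<in>ground - \<tau>. mass (insert v \<tau>) * (f v)^2)"

definition link_total :: "'a set \<Rightarrow> ('a \<Rightarrow> real) \<Rightarrow> real" where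
  "link_total \<tau> f = (\<Sum>v\<in>ground - \<tau>. mass (insert v \<tau>) * f v)"

definition link_volume :: "'a set \<Rightarrow> real" where
  "link_volume \<tau> = (\<Sum>v\<in>ground - \<tau>. mass (insert v \<tau>))"

definition link_form :: "'a set \<Rightarrow> ('a \<Rightarrow> real) \<Rightarrow> real" where
  "link_form \<tau> f = (\<Sum>u\<in>ground - \<tau>. \<Sum>v\<in>ground - \<tau>. edge_mass \<tau> u v * f u * f v)"

definition link_walk :: "'a set \<Rightarrow> ('a \<Rightarrow> real) \<Rightarrow> 'a \<Rightarrow> real" where
  "link_walk \<tau> f x = (\<Sum>u\<in>ground - \<tau>. edge_mass \<tau> x u * f u) / (link_dim \<tau> * mass (insert x \<tau>))"

text \<open>The Rayleigh bound \<open>\<mu>\<close> for the walk on the link of \<open>\<tau>\<close>, in the form valid for all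
  functions (see \<open>reversible_walk.quad_form_le_shifted\<close>).\<close>
definition link_bound :: "'a set \<Rightarrow> real \<Rightarrow> bool" where
  "link_bound \<tau> \<mu> \<longleftrightarrow> (\<forall>f. link_form \<tau> f
     \<le> link_dim \<tau> * (\<mu> * link_sq_norm \<tau> f + (1 - \<mu>) * (link_total \<tau> f)^2 / link_volume \<tau>))"

lemma edge_mass_self [simp]: "edge_mass \<tau> u u = 0"
  unfolding edge_mass_def by simp

lemma edge_mass_commute: "edge_mass \<tau> u v = edge_mass \<tau> v u"
  unfolding edge_mass_def by (simp add: insert_commute)

lemma edge_mass_nonneg: "0 \<le> edge_mass \<tau> u v"
  unfolding edge_mass_def using mass_nonneg by simp

lemma link_bound_if_mass_eq_0:
  assumes "mass \<tau> = 0"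
  shows "link_bound \<tau> \<mu>"
proof -
  have "mass (insert u \<tau>) = 0" "mass (insert u (insert v \<tau>)) = 0" for u v
    using assms mass_insert_eq_0 by blast+
  then have "link_form \<tau> f = 0" "link_sq_norm \<tau> f = 0" "link_total \<tau> f = 0" for f
    unfolding link_form_def edge_mass_def link_sq_norm_def link_total_def
    by (auto intro!: sum.neutral)
  then show ?thesis unfolding link_bound_def by simp
qed

lemma sum_link_sq_norm_insert:
  assumes "finite \<tau>" and "card \<tau> + 1 \<le> d"
  shows "(\<Sum>x\<in>ground - \<tau>. link_sq_norm (insert x \<tau>) f) = link_dim \<tau> * link_sq_norm \<tau> f"
proof -
  have "(\<Sum>x\<in>ground - \<tau>. link_sq_norm (insert x \<tau>) f)
      = (\<Sum>x\<in>ground - \<tau>. \<Sum>u\<in>ground - \<tau>. if u = x then 0 else mass (insert u (insert x \<tau>)) * (f u)^2)"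
    unfolding link_sq_norm_def by (intro sum.cong refl sum_ground_minus_insert)
  also have "\<dots> = (\<Sum>u\<in>ground - \<tau>. \<Sum>x\<in>ground - \<tau>. if u = x then 0 else mass (insert u (insert x \<tau>)) * (f u)^2)"
    by (rule sum.swap)
  also have "\<dots> = (\<Sum>u\<in>ground - \<tau>. link_dim \<tau> * (mass (insert u \<tau>) * (f u)^2))"
  proof (intro sum.cong refl)
    fix u assume u: "u \<in> ground - \<tau>"
    have "(\<Sum>x\<in>ground - \<tau>. if u = x then 0 else mass (insert u (insert x \<tau>)) * (f u)^2)
        = (\<Sum>x\<in>ground - \<tau>. if x \<in> insert u \<tau> then 0 else mass (insert x (insert u \<tau>))) * (f u)^2"
      unfolding sum_distrib_right by (intro sum.cong refl) (auto simp: insert_commute)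
    also have "\<dots> = link_dim \<tau> * (mass (insert u \<tau>) * (f u)^2)"
      using u assms sum_mass_insert_outside[OF finite_insert[THEN iffD2, OF assms(1)] subset_insertI]
      by (simp add: link_dim_def)
    finally show "(\<Sum>x\<in>ground - \<tau>. if u = x then 0 else mass (insert u (insert x \<tau>)) * (f u)^2)
        = link_dim \<tau> * (mass (insert u \<tau>) * (f u)^2)" .
  qed
  finally show ?thesis unfolding link_sq_norm_def by (simp add: sum_distrib_left)
qed

lemma sum_link_form_insert:
  assumes "finite \<tau>" and "card \<tau> + 2 \<le> d"
  shows "(\<Sum>x\<in>ground - \<tau>. link_form (insert x \<tau>) f) = (link_dim \<tau> - 1) * link_form \<tau> f"
proof -
  let ?E = "\<lambda>x u v. if u = x \<or> v = x then 0 else edge_mass (insert x \<tau>) u v * f u * f v"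
  have "(\<Sum>x\<in>ground - \<tau>. link_form (insert x \<tau>) f)
      = (\<Sum>x\<in>ground - \<tau>. \<Sum>u\<in>ground - \<tau>. \<Sum>v\<in>ground - \<tau>. ?E x u v)"
  proof (intro sum.cong refl)
    fix x assume x: "x \<in> ground - \<tau>"
    show "link_form (insert x \<tau>) f = (\<Sum>u\<in>ground - \<tau>. \<Sum>v\<in>ground - \<tau>. ?E x u v)"
      unfolding link_form_def sum_ground_minus_insert[OF x] by (intro sum.cong refl) auto
  qed
  also have "\<dots> = (\<Sum>u\<in>ground - \<tau>. \<Sum>v\<in>ground - \<tau>. \<Sum>x\<in>ground - \<tau>. ?E x u v)"
    by (subst sum.swap) (rule sum.cong[OF refl sum.swap])
  also have "\<dots> = (\<Sum>u\<in>ground - \<tau>. \<Sum>v\<in>ground - \<tau>. (link_dim \<tau> - 1) * (edge_mass \<tau> u v * f u * f v))"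
  proof (intro sum.cong refl)
    fix u v assume u: "u \<in> ground - \<tau>" and v: "v \<in> ground - \<tau>"
    show "(\<Sum>x\<in>ground - \<tau>. ?E x u v) = (link_dim \<tau> - 1) * (edge_mass \<tau> u v * f u * f v)"
    proof (cases "u = v")
      case True
      have "(\<Sum>x\<in>ground - \<tau>. ?E x v v) = 0" by (rule sum.neutral) simp
      then show ?thesis unfolding True by simp
    next
      case False
      let ?\<eta> = "insert u (insert v \<tau>)"
      have card: "card ?\<eta> = card \<tau> + 2" using assms(1) u v False by simp
      have "finite ?\<eta>" "\<tau> \<subseteq> ?\<eta>" using assms(1) by auto
      have "(\<Sum>x\<in>ground - \<tau>. ?E x u v)
          = (\<Sum>x\<in>ground - \<tau>. if x \<in> ?\<eta> then 0 else mass (insert x ?\<eta>)) * (f u * f v)"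
        unfolding sum_distrib_right using False u v
        by (intro sum.cong refl) (auto simp: edge_mass_def insert_commute)
      also have "\<dots> = (link_dim \<tau> - 1) * (edge_mass \<tau> u v * f u * f v)"
        using sum_mass_insert_outside[OF \<open>finite ?\<eta>\<close> \<open>\<tau> \<subseteq> ?\<eta>\<close>] assms card False
        by (simp add: edge_mass_def link_dim_def of_nat_diff)
      finally show ?thesis .
    qed
  qed
  finally show ?thesis unfolding link_form_def by (simp add: sum_distrib_left)
qed

lemma link_total_insert:
  assumes "finite \<tau>" and "card \<tau> + 1 \<le> d" and x: "x \<in> ground - \<tau>"
  shows "(link_total (insert x \<tau>) f)^2 / link_volume (insert x \<tau>)
    = link_dim \<tau> * mass (insert x \<tau>) * (link_walk \<tau> f x)^2"
proof -
  have volume: "link_volume (insert x \<tau>) = link_dim \<tau> * mass (insert x \<tau>)"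
    unfolding link_volume_def link_dim_def using assms sum_mass_insert[of "insert x \<tau>"]
    by (simp add: of_nat_diff)
  have total: "link_total (insert x \<tau>) f = (\<Sum>u\<in>ground - \<tau>. edge_mass \<tau> x u * f u)"
    unfolding link_total_def sum_ground_minus_insert[OF x] edge_mass_def
    by (intro sum.cong refl) (auto simp: insert_commute)
  show ?thesis
  proof (cases "mass (insert x \<tau>) = 0")
    case True
    then have "link_total (insert x \<tau>) f = 0"
      unfolding link_total_def using mass_insert_eq_0 by (auto intro!: sum.neutral)
    then show ?thesis using True by simp
  next
    case False
    have "0 < link_dim \<tau>" unfolding link_dim_def using assms by simp
    then show ?thesis
      unfolding volume link_walk_def total[symmetric] using False by (simp add: power2_eq_square)
  qed
qed

lemma garland_local_inequality:
  assumes "finite \<tau>" and "card \<tau> + 2 \<le> d"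
    and cofaces: "\<And>x. x \<in> ground - \<tau> \<Longrightarrow> link_bound (insert x \<tau>) \<mu>"
  shows "link_form \<tau> f \<le> link_dim \<tau> * (\<mu> * link_sq_norm \<tau> f + (1 - \<mu>) * link_sq_norm \<tau> (link_walk \<tau> f))"
proof -
  have dim_insert: "link_dim (insert x \<tau>) = link_dim \<tau> - 1" if "x \<in> ground - \<tau>" for x
    unfolding link_dim_def using that assms by (simp add: of_nat_diff)
  have "(link_dim \<tau> - 1) * link_form \<tau> f = (\<Sum>x\<in>ground - \<tau>. link_form (insert x \<tau>) f)"
    using sum_link_form_insert[OF assms(1,2)] by simp
  also have "\<dots> \<le> (\<Sum>x\<in>ground - \<tau>. (link_dim \<tau> - 1) * (\<mu> * link_sq_norm (insert x \<tau>) f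
      + (1 - \<mu>) * (link_dim \<tau> * (mass (insert x \<tau>) * (link_walk \<tau> f x)^2))))"
  proof (rule sum_mono)
    fix x assume x: "x \<in> ground - \<tau>"
    show "link_form (insert x \<tau>) f \<le> (link_dim \<tau> - 1) * (\<mu> * link_sq_norm (insert x \<tau>) f
      + (1 - \<mu>) * (link_dim \<tau> * (mass (insert x \<tau>) * (link_walk \<tau> f x)^2)))"
    proof -
      have "link_form (insert x \<tau>) f \<le> link_dim (insert x \<tau>) * (\<mu> * link_sq_norm (insert x \<tau>) f
          + (1 - \<mu>) * ((link_total (insert x \<tau>) f)^2 / link_volume (insert x \<tau>)))"
        using cofaces[OF x] unfolding link_bound_def by simp
      then show ?thesis
        using link_total_insert[OF assms(1) _ x, of f] assms(2) dim_insert[OF x] by (simp add: mult.assoc)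
    qed
  qed
  also have "\<dots> = (\<Sum>x\<in>ground - \<tau>. ((link_dim \<tau> - 1) * \<mu>) * link_sq_norm (insert x \<tau>) f
      + ((link_dim \<tau> - 1) * (1 - \<mu>) * link_dim \<tau>) * (mass (insert x \<tau>) * (link_walk \<tau> f x)^2))"
    by (intro sum.cong refl) (simp add: algebra_simps)
  also have "\<dots> = ((link_dim \<tau> - 1) * \<mu>) * (\<Sum>x\<in>ground - \<tau>. link_sq_norm (insert x \<tau>) f)
      + ((link_dim \<tau> - 1) * (1 - \<mu>) * link_dim \<tau>) * (\<Sum>x\<in>ground - \<tau>. mass (insert x \<tau>) * (link_walk \<tau> f x)^2)"
    by (simp add: sum.distrib sum_distrib_left)
  also have "\<dots> = (link_dim \<tau> - 1) * (link_dim \<tau> * (\<mu> * link_sq_norm \<tau> f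
      + (1 - \<mu>) * link_sq_norm \<tau> (link_walk \<tau> f)))"
    using sum_link_sq_norm_insert[OF assms(1), of f] assms(2)
    unfolding link_sq_norm_def[of _ "link_walk \<tau> f"] by (simp add: algebra_simps)
  finally show ?thesis
    using assms(2) unfolding link_dim_def by (simp add: of_nat_diff)
qed

end

section \<open>The walk on a link as a reversible walk\<close>

locale connected_link = weighted_pure_complex +
  fixes \<tau> :: "'a set"
  assumes face: "\<tau> \<in> X" and codim: "card \<tau> + 1 \<le> d"
    and connected: "skel_connected (link X \<tau>)"
begin

definition k :: nat where "k = d - card \<tau>"
definition vs :: "'a list" where "vs = vertex_list (link X \<tau>)"
definition nv :: nat where "nv = length vs"
definition vertex_mass :: "nat \<Rightarrow> real" where "vertex_mass i = mass (insert (vs ! i) \<tau>)"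
definition link_adj :: "real mat" where "link_adj = adj_matrix (link X \<tau>) k (link_dist X d P \<tau>)"

lemma finite_tau: "finite \<tau>"
  using finite_face face .

lemma k_pos: "1 \<le> k"
  unfolding k_def using codim by simp

lemma link_dim_eq: "link_dim \<tau> = real k"
  unfolding link_dim_def k_def ..

lemma vertices_link: "vertices (link X \<tau>) = {v. v \<notin> \<tau> \<and> insert v \<tau> \<in> X}"
proof -
  have "{v} \<in> link X \<tau> \<longleftrightarrow> v \<notin> \<tau> \<and> insert v \<tau> \<in> X" for v
  proof
    assume "{v} \<in> link X \<tau>"
    then obtain \<sigma> where "{v} = \<sigma> - \<tau>" "\<sigma> \<in> X" "\<tau> \<subseteq> \<sigma>" unfolding link_def by blast
    moreover from this have "\<sigma> = insert v \<tau>" by blast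
    ultimately show "v \<notin> \<tau> \<and> insert v \<tau> \<in> X" by blast
  next
    assume "v \<notin> \<tau> \<and> insert v \<tau> \<in> X"
    moreover from this have "{v} = insert v \<tau> - \<tau>" by blast
    ultimately show "{v} \<in> link X \<tau>" unfolding link_def by blast
  qed
  then show ?thesis unfolding vertices_def by auto
qed

lemma skel_edge_link_iff:
  "skel_edge (link X \<tau>) a b \<longleftrightarrow> a \<noteq> b \<and> a \<notin> \<tau> \<and> b \<notin> \<tau> \<and> insert a (insert b \<tau>) \<in> X"
proof
  assume "skel_edge (link X \<tau>) a b"
  then have ab: "a \<noteq> b" "{a,b} \<in> link X \<tau>" unfolding skel_edge_def by auto
  then obtain \<sigma> where "{a,b} = \<sigma> - \<tau>" "\<sigma> \<in> X" "\<tau> \<subseteq> \<sigma>" unfolding link_def by blast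
  moreover from this have "\<sigma> = insert a (insert b \<tau>)" by blast
  ultimately show "a \<noteq> b \<and> a \<notin> \<tau> \<and> b \<notin> \<tau> \<and> insert a (insert b \<tau>) \<in> X" using ab by blast
next
  assume h: "a \<noteq> b \<and> a \<notin> \<tau> \<and> b \<notin> \<tau> \<and> insert a (insert b \<tau>) \<in> X"
  then have "{a,b} = insert a (insert b \<tau>) - \<tau>" by blast
  then show "skel_edge (link X \<tau>) a b" unfolding skel_edge_def link_def using h by auto
qed

lemma vertices_link_subset: "vertices (link X \<tau>) \<subseteq> ground - \<tau>"
  using vertices_link face_subset_ground by auto

lemma distinct_vs: "distinct vs" and set_vs: "set vs = vertices (link X \<tau>)"
proof -
  have "finite (vertices (link X \<tau>))"
    using vertices_link_subset finite_ground finite_subset by blast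
  then have "\<exists>xs. distinct xs \<and> set xs = vertices (link X \<tau>)"
    using finite_distinct_list by blast
  then have "distinct vs \<and> set vs = vertices (link X \<tau>)"
    unfolding vs_def vertex_list_def by (rule someI_ex)
  then show "distinct vs" "set vs = vertices (link X \<tau>)" by auto
qed

lemma nth_vs: "i < nv \<Longrightarrow> vs ! i \<in> vertices (link X \<tau>)"
  unfolding nv_def using set_vs nth_mem by blast

lemma mass_insert_pos: "v \<in> vertices (link X \<tau>) \<Longrightarrow> 0 < mass (insert v \<tau>)"
  using vertices_link mass_pos by auto

lemma mass_insert_outside_link:
  "v \<in> ground - \<tau> \<Longrightarrow> v \<notin> vertices (link X \<tau>) \<Longrightarrow> mass (insert v \<tau>) = 0"
  using vertices_link mass_eq_0 by auto

lemma edge_mass_outside_link: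
  assumes "v \<in> ground - \<tau>" and "v \<notin> vertices (link X \<tau>)"
  shows "edge_mass \<tau> u v = 0" and "edge_mass \<tau> v u = 0"
  using mass_insert_eq_0[OF mass_insert_outside_link[OF assms], of u]
  unfolding edge_mass_def by (simp_all add: insert_commute)

lemma sum_ground_eq_sum_vs:
  assumes "\<And>v. v \<in> ground - \<tau> \<Longrightarrow> v \<notin> vertices (link X \<tau>) \<Longrightarrow> h v = 0"
  shows "(\<Sum>v\<in>ground - \<tau>. h v) = (\<Sum>i<nv. h (vs ! i))"
proof -
  have "(\<Sum>v\<in>ground - \<tau>. h v) = (\<Sum>v\<in>vertices (link X \<tau>). h v)"
    by (rule sum.mono_neutral_right) (use finite_ground vertices_link_subset assms in auto)
  also have "\<dots> = (\<Sum>i<nv. h (vs ! i))" unfolding nv_def using distinct_vs set_vs sum_nth_distinct[of vs h] by simp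
  finally show ?thesis .
qed

lemma weight_link:
  assumes "\<eta> \<inter> \<tau> = {}"
  shows "weight (link X \<tau>) k (link_dist X d P \<tau>) \<eta> = mass (\<tau> \<union> \<eta>) / (mass \<tau> * real (Suc k choose card \<eta>))"
proof -
  let ?A = "{\<sigma>\<in>top_faces X d. \<tau> \<union> \<eta> \<subseteq> \<sigma>}"
  have card_diff: "card (\<sigma> - \<tau>) = card \<sigma> - card \<tau>" if "\<sigma> \<in> X" "\<tau> \<subseteq> \<sigma>" for \<sigma>
    using that finite_tau by (simp add: card_Diff_subset)
  have "{\<sigma>'\<in>top_faces (link X \<tau>) k. \<eta> \<subseteq> \<sigma>'} = (\<lambda>\<sigma>. \<sigma> - \<tau>) ` ?A"
  proof (intro equalityI subsetI)
    fix \<sigma>' assume "\<sigma>' \<in> {\<sigma>'\<in>top_faces (link X \<tau>) k. \<eta> \<subseteq> \<sigma>'}"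
    then obtain \<sigma> where \<sigma>: "\<sigma>' = \<sigma> - \<tau>" "\<sigma> \<in> X" "\<tau> \<subseteq> \<sigma>" "card (\<sigma> - \<tau>) = k + 1" "\<eta> \<subseteq> \<sigma> - \<tau>"
      unfolding top_faces_def link_def by blast
    have "card \<sigma> - card \<tau> = d - card \<tau> + 1" using \<sigma>(2-4) card_diff unfolding k_def by simp
    then have "card \<sigma> = d + 1" using codim by arith
    then have "\<sigma> \<in> top_faces X d" "\<tau> \<union> \<eta> \<subseteq> \<sigma>" using \<sigma> unfolding top_faces_def by auto
    then show "\<sigma>' \<in> (\<lambda>\<sigma>. \<sigma> - \<tau>) ` ?A" using \<sigma> by blast
  next
    fix \<sigma>' assume "\<sigma>' \<in> (\<lambda>\<sigma>. \<sigma> - \<tau>) ` ?A"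
    then obtain \<sigma> where \<sigma>: "\<sigma>' = \<sigma> - \<tau>" "\<sigma> \<in> top_faces X d" "\<tau> \<union> \<eta> \<subseteq> \<sigma>" by blast
    then have "\<sigma> \<in> X" using top_faces_subset by blast
    then have "\<sigma> - \<tau> \<in> link X \<tau>" unfolding link_def using \<sigma> by blast
    moreover have "card (\<sigma> - \<tau>) = k + 1"
      using card_diff[OF \<open>\<sigma> \<in> X\<close>] \<sigma> card_top_face codim unfolding k_def by auto
    moreover have "\<eta> \<subseteq> \<sigma> - \<tau>" using \<sigma> assms by blast
    ultimately show "\<sigma>' \<in> {\<sigma>'\<in>top_faces (link X \<tau>) k. \<eta> \<subseteq> \<sigma>'}"
      unfolding top_faces_def \<sigma>(1) by simp
  qed
  moreover have "inj_on (\<lambda>\<sigma>. \<sigma> - \<tau>) ?A" by (rule inj_onI) blast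
  moreover have "link_dist X d P \<tau> (\<sigma> - \<tau>) = P \<sigma> / mass \<tau>" if "\<sigma> \<in> ?A" for \<sigma>
    using that unfolding link_dist_def mass_def by (simp add: Un_absorb2)
  ultimately have "(\<Sum>\<sigma>'\<in>{\<sigma>'\<in>top_faces (link X \<tau>) k. \<eta> \<subseteq> \<sigma>'}. link_dist X d P \<tau> \<sigma>') = (\<Sum>\<sigma>\<in>?A. P \<sigma> / mass \<tau>)"
    by (simp add: sum.reindex)
  also have "\<dots> = mass (\<tau> \<union> \<eta>) / mass \<tau>" unfolding mass_def by (simp add: sum_divide_distrib)
  finally show ?thesis unfolding weight_def by simp
qed

lemma link_adj_carrier: "link_adj \<in> carrier_mat nv nv"
  unfolding link_adj_def adj_matrix_def Let_def vs_def[symmetric] nv_def[symmetric] by simp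

lemma link_adj_entry:
  assumes i: "i < nv" and j: "j < nv"
  shows "link_adj $$ (i,j) = edge_mass \<tau> (vs ! i) (vs ! j) / (real k * mass (insert (vs ! i) \<tau>))"
proof -
  let ?a = "vs ! i" and ?b = "vs ! j" and ?w = "weight (link X \<tau>) k (link_dist X d P \<tau>)"
  have a: "?a \<notin> \<tau>" "0 < mass (insert ?a \<tau>)" and b: "?b \<notin> \<tau>"
    using nth_vs[OF i] nth_vs[OF j] mass_insert_pos vertices_link by auto
  have entry: "link_adj $$ (i,j) = (if skel_edge (link X \<tau>) ?a ?b then ?w {?a, ?b} / (2 * ?w {?a}) else 0)"
    unfolding link_adj_def adj_matrix_def Let_def vs_def[symmetric] nv_def[symmetric] using i j by simp
  show ?thesis
  proof (cases "skel_edge (link X \<tau>) ?a ?b")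
    case True
    then have ab: "?a \<noteq> ?b" using skel_edge_link_iff by auto
    have "card {?a, ?b} = 2" "{?a, ?b} \<inter> \<tau> = {}" "\<tau> \<union> {?a, ?b} = insert ?a (insert ?b \<tau>)"
      using ab a b by auto
    then have w2: "?w {?a, ?b} = mass (insert ?a (insert ?b \<tau>)) / (mass \<tau> * ((1 + real k) * real k / 2))"
      using weight_link[of "{?a, ?b}"] by (simp only: real_choose_two of_nat_Suc)
    have w1: "?w {?a} = mass (insert ?a \<tau>) / (mass \<tau> * (1 + real k))"
      using weight_link[of "{?a}"] a by simp
    have "link_adj $$ (i,j) = ?w {?a, ?b} / (2 * ?w {?a})" unfolding entry using True by simp
    also have "\<dots> = mass (insert ?a (insert ?b \<tau>)) / (real k * mass (insert ?a \<tau>))"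
      unfolding w1 w2 by (rule adjacency_weight_ratio) (use a(2) mass_pos[OF face] k_pos in auto)
    finally have "link_adj $$ (i,j) = mass (insert ?a (insert ?b \<tau>)) / (real k * mass (insert ?a \<tau>))" .
    then show ?thesis unfolding edge_mass_def using ab by simp
  next
    case False
    then have "edge_mass \<tau> ?a ?b = 0"
      using skel_edge_link_iff a(1) b mass_eq_0 unfolding edge_mass_def by auto
    then show ?thesis unfolding entry using False by simp
  qed
qed

lemma sum_edge_mass:
  assumes "a \<in> vertices (link X \<tau>)"
  shows "(\<Sum>v\<in>ground - \<tau>. edge_mass \<tau> a v) = real k * mass (insert a \<tau>)"
proof -
  have a: "a \<in> ground - \<tau>" using assms vertices_link_subset by blast
  have "(\<Sum>v\<in>ground - \<tau>. edge_mass \<tau> a v) = (\<Sum>v\<in>ground - \<tau>. if v \<in> insert a \<tau> then 0 else mass (insert v (insert a \<tau>)))"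
    unfolding edge_mass_def by (intro sum.cong refl) (auto simp: insert_commute)
  also have "\<dots> = real k * mass (insert a \<tau>)"
    using sum_mass_insert_outside[OF finite_insert[THEN iffD2, OF finite_tau] subset_insertI]
      a codim finite_tau by (simp add: k_def)
  finally show ?thesis .
qed

lemma two_le_nv: "2 \<le> nv"
proof -
  obtain \<sigma> where \<sigma>: "\<sigma> \<in> top_faces X d" "\<tau> \<subseteq> \<sigma>" using exists_top_face[OF face] by blast
  then have "\<sigma> - \<tau> \<subseteq> vertices (link X \<tau>)"
    unfolding vertices_link using top_faces_subset face_subset_closed by auto
  moreover have "finite (vertices (link X \<tau>))"
    using finite_ground vertices_link_subset finite_subset by blast
  ultimately have "card (\<sigma> - \<tau>) \<le> card (vertices (link X \<tau>))" by (simp add: card_mono)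
  also have "\<dots> = nv" unfolding nv_def using distinct_vs set_vs distinct_card by metis
  finally have "card (\<sigma> - \<tau>) \<le> nv" .
  moreover have "card (\<sigma> - \<tau>) = d + 1 - card \<tau>"
    using \<sigma> finite_tau card_top_face by (simp add: card_Diff_subset)
  ultimately show ?thesis using codim by simp
qed

definition vertex_index :: "'a \<Rightarrow> nat" where
  "vertex_index v = (SOME i. i < nv \<and> vs ! i = v)"

lemma vertex_index:
  assumes "v \<in> vertices (link X \<tau>)"
  shows "vertex_index v < nv \<and> vs ! vertex_index v = v"
proof -
  have "\<exists>i. i < nv \<and> vs ! i = v" using assms set_vs unfolding nv_def by (metis in_set_conv_nth)
  then show ?thesis unfolding vertex_index_def by (rule someI_ex)
qed

lemma vertex_index_nth: "i < nv \<Longrightarrow> vertex_index (vs ! i) = i"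
  using vertex_index[OF nth_vs] distinct_vs nth_eq_iff_index_eq unfolding nv_def by blast

lemma vertex_mass_pos: "i < nv \<Longrightarrow> 0 < vertex_mass i"
  unfolding vertex_mass_def using mass_insert_pos nth_vs by blast

lemma link_adj_row_sum:
  assumes i: "i < nv"
  shows "(\<Sum>j<nv. link_adj $$ (i, j)) = 1"
proof -
  have "(\<Sum>j<nv. link_adj $$ (i, j)) = (\<Sum>j<nv. edge_mass \<tau> (vs ! i) (vs ! j)) / (real k * mass (insert (vs ! i) \<tau>))"
    using link_adj_entry[OF i] by (simp add: sum_divide_distrib)
  also have "(\<Sum>j<nv. edge_mass \<tau> (vs ! i) (vs ! j)) = (\<Sum>v\<in>ground - \<tau>. edge_mass \<tau> (vs ! i) v)"
    by (rule sum_ground_eq_sum_vs[symmetric]) (use edge_mass_outside_link in auto)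
  finally show ?thesis
    using sum_edge_mass[OF nth_vs[OF i]] k_pos mass_insert_pos[OF nth_vs[OF i]] by simp
qed

lemma link_adj_nonzero_if_skel_edge:
  assumes e: "skel_edge (link X \<tau>) y z"
  shows "y \<in> vertices (link X \<tau>)" and "z \<in> vertices (link X \<tau>)"
    and "link_adj $$ (vertex_index y, vertex_index z) \<noteq> 0"
proof -
  have "insert y (insert z \<tau>) \<in> X" "y \<notin> \<tau>" "z \<notin> \<tau>" using e skel_edge_link_iff by auto
  then have "insert y \<tau> \<in> X" "insert z \<tau> \<in> X" "0 < mass (insert y (insert z \<tau>))"
    using face_subset_closed mass_pos by (blast, blast, blast)
  then show yz: "y \<in> vertices (link X \<tau>)" "z \<in> vertices (link X \<tau>)"
    using \<open>y \<notin> \<tau>\<close> \<open>z \<notin> \<tau>\<close> unfolding vertices_link by auto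
  show "link_adj $$ (vertex_index y, vertex_index z) \<noteq> 0"
    using link_adj_entry vertex_index[OF yz(1)] vertex_index[OF yz(2)] e k_pos
      \<open>0 < mass (insert y (insert z \<tau>))\<close> mass_insert_pos[OF yz(1)]
    unfolding skel_edge_def edge_mass_def by auto
qed

text \<open>Irreducibility is connectivity of the 1-skeleton of the link: a function constant along
  edges is constant along paths.\<close>
sublocale walk: reversible_walk nv vertex_mass link_adj
proof unfold_locales
  fix i j assume i: "i < nv" and j: "j < nv"
  show "vertex_mass i * link_adj $$ (i, j) = vertex_mass j * link_adj $$ (j, i)"
    unfolding link_adj_entry[OF i j] link_adj_entry[OF j i]
    using vertex_mass_pos[OF i] vertex_mass_pos[OF j] edge_mass_commute[of \<tau> "vs ! i" "vs ! j"]
    unfolding vertex_mass_def by simp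
  show "0 \<le> link_adj $$ (i, j)"
    unfolding link_adj_entry[OF i j] using edge_mass_nonneg vertex_mass_pos[OF i]
    unfolding vertex_mass_def by simp
next
  fix f :: "nat \<Rightarrow> real" and i j
  assume const: "\<And>i j. i < nv \<Longrightarrow> j < nv \<Longrightarrow> link_adj $$ (i, j) \<noteq> 0 \<Longrightarrow> f i = f j"
    and i: "i < nv" and j: "j < nv"
  have edge: "f (vertex_index y) = f (vertex_index z)" if "skel_edge (link X \<tau>) y z" for y z
    using const vertex_index link_adj_nonzero_if_skel_edge[OF that] by blast
  have "(skel_edge (link X \<tau>))\<^sup>*\<^sup>* (vs ! i) (vs ! j)"
    using connected nth_vs[OF i] nth_vs[OF j] unfolding skel_connected_def by blast
  then have "f (vertex_index (vs ! i)) = f (vertex_index (vs ! j))"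
    by (induction rule: rtranclp_induct) (auto dest: edge)
  then show "f i = f j" using vertex_index_nth[OF i] vertex_index_nth[OF j] by simp
qed (use link_adj_carrier vertex_mass_pos link_adj_row_sum two_le_nv in auto)

lemma inner_w_vs:
  "walk.inner_w (\<lambda>i. f (vs ! i)) (\<lambda>i. h (vs ! i)) = (\<Sum>v\<in>ground - \<tau>. mass (insert v \<tau>) * f v * h v)"
  unfolding walk.inner_w_def vertex_mass_def
  by (rule sum_ground_eq_sum_vs[symmetric]) (use mass_insert_outside_link in auto)

lemma link_sq_norm_eq: "link_sq_norm \<tau> f = walk.inner_w (\<lambda>i. f (vs ! i)) (\<lambda>i. f (vs ! i))"
  unfolding inner_w_vs link_sq_norm_def by (simp add: power2_eq_square mult.assoc)

lemma link_total_eq: "link_total \<tau> f = walk.inner_w (\<lambda>i. f (vs ! i)) walk.ones"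
  using inner_w_vs[of f "\<lambda>_. 1"] unfolding link_total_def by simp

lemma link_volume_eq: "link_volume \<tau> = walk.inner_w walk.ones walk.ones"
  using inner_w_vs[of "\<lambda>_. 1" "\<lambda>_. 1"] unfolding link_volume_def by simp

lemma act_vs: "i < nv \<Longrightarrow> walk.act (\<lambda>i. f (vs ! i)) i = link_walk \<tau> f (vs ! i)"
proof -
  assume i: "i < nv"
  have "walk.act (\<lambda>i. f (vs ! i)) i
      = (\<Sum>j<nv. edge_mass \<tau> (vs ! i) (vs ! j) * f (vs ! j)) / (real k * mass (insert (vs ! i) \<tau>))"
    unfolding walk.act_def using link_adj_entry[OF i] by (simp add: sum_divide_distrib)
  also have "(\<Sum>j<nv. edge_mass \<tau> (vs ! i) (vs ! j) * f (vs ! j)) = (\<Sum>v\<in>ground - \<tau>. edge_mass \<tau> (vs ! i) v * f v)"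
    by (rule sum_ground_eq_sum_vs[symmetric]) (use edge_mass_outside_link in auto)
  finally show ?thesis unfolding link_walk_def link_dim_eq .
qed

lemma quad_form_vs: "walk.quad_form (\<lambda>i. f (vs ! i)) = link_form \<tau> f / real k"
proof -
  have "walk.quad_form (\<lambda>i. f (vs ! i))
      = (\<Sum>i<nv. \<Sum>j<nv. edge_mass \<tau> (vs ! i) (vs ! j) * f (vs ! i) * f (vs ! j)) / real k"
    unfolding walk.quad_form_def walk.inner_w_def walk.act_def vertex_mass_def
    using vertex_mass_pos unfolding vertex_mass_def
    by (simp add: sum_divide_distrib sum_distrib_left link_adj_entry less_imp_neq[symmetric] ac_simps)
  also have "(\<Sum>i<nv. \<Sum>j<nv. edge_mass \<tau> (vs ! i) (vs ! j) * f (vs ! i) * f (vs ! j))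
      = (\<Sum>u\<in>ground - \<tau>. \<Sum>j<nv. edge_mass \<tau> u (vs ! j) * f u * f (vs ! j))"
    by (rule sum_ground_eq_sum_vs[symmetric]) (use edge_mass_outside_link in auto)
  also have "\<dots> = link_form \<tau> f" unfolding link_form_def
    by (intro sum.cong refl, rule sum_ground_eq_sum_vs[symmetric]) (use edge_mass_outside_link in auto)
  finally show ?thesis .
qed

lemma exists_function_on_vs: "\<exists>f. \<forall>i<nv. g i = f (vs ! i)"
  using vertex_index_nth by (intro exI[of _ "\<lambda>v. g (vertex_index v)"]) auto

lemma link_bound_iff_rayleigh_bound: "link_bound \<tau> \<mu> \<longleftrightarrow> walk.rayleigh_bound \<mu>"
proof
  assume bound: "link_bound \<tau> \<mu>"
  show "walk.rayleigh_bound \<mu>" unfolding walk.rayleigh_bound_def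
  proof safe
    fix g assume g: "walk.inner_w g walk.ones = 0"
    obtain f where gf: "\<forall>i<nv. g i = f (vs ! i)" using exists_function_on_vs by blast
    have "walk.quad_form g = walk.quad_form (\<lambda>i. f (vs ! i))"
      using gf by (intro walk.quad_form_cong) auto
    moreover have "walk.inner_w g g = walk.inner_w (\<lambda>i. f (vs ! i)) (\<lambda>i. f (vs ! i))"
      "walk.inner_w g walk.ones = walk.inner_w (\<lambda>i. f (vs ! i)) walk.ones"
      using gf by (intro walk.inner_w_cong; simp)+
    ultimately have "walk.quad_form g = link_form \<tau> f / real k" "walk.inner_w g g = link_sq_norm \<tau> f"
      "link_total \<tau> f = 0"
      using g unfolding quad_form_vs link_sq_norm_eq link_total_eq by auto
    moreover have "link_form \<tau> f \<le> real k * (\<mu> * link_sq_norm \<tau> f)"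
      using bound \<open>link_total \<tau> f = 0\<close> unfolding link_bound_def link_dim_eq by (metis power2_eq_square
          mult_zero_left mult_zero_right div_0 add_0_right)
    ultimately show "walk.quad_form g \<le> \<mu> * walk.inner_w g g"
      using k_pos by (simp add: divide_le_eq mult.commute)
  qed
next
  assume "walk.rayleigh_bound \<mu>"
  show "link_bound \<tau> \<mu>" unfolding link_bound_def
  proof
    fix f
    have "link_form \<tau> f / real k \<le> \<mu> * link_sq_norm \<tau> f + (1 - \<mu>) * (link_total \<tau> f)^2 / link_volume \<tau>"
      using walk.quad_form_le_shifted[OF \<open>walk.rayleigh_bound \<mu>\<close>, of "\<lambda>i. f (vs ! i)"]
      unfolding quad_form_vs link_sq_norm_eq link_total_eq link_volume_eq .
    then show "link_form \<tau> f \<le> link_dim \<tau> * (\<mu> * link_sq_norm \<tau> f + (1 - \<mu>) * (link_total \<tau> f)^2 / link_volume \<tau>)"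
      unfolding link_dim_eq using k_pos by (simp add: divide_le_eq mult.commute)
  qed
qed

lemma lambda2_le_iff_link_bound:
  "lambda2 (link X \<tau>) (d - card \<tau>) (link_dist X d P \<tau>) \<le> \<mu> \<longleftrightarrow> link_bound \<tau> \<mu>"
proof -
  have "lambda2 (link X \<tau>) (d - card \<tau>) (link_dist X d P \<tau>) = walk.second_eigenvalue"
    unfolding walk.second_eigenvalue_def unfolding lambda2_def eigenvalues_desc_def link_adj_def k_def ..
  then show ?thesis
    using walk.second_eigenvalue_le_iff_rayleigh_bound[OF two_le_nv] link_bound_iff_rayleigh_bound by simp
qed

lemma link_bound_of_local_inequality:
  assumes local: "\<And>f. link_form \<tau> f \<le> link_dim \<tau> * (\<mu> * link_sq_norm \<tau> f + (1 - \<mu>) * link_sq_norm \<tau> (link_walk \<tau> f))"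
    and "\<mu> < 1"
  shows "link_bound \<tau> (\<mu> / (1 - \<mu>))"
  unfolding link_bound_iff_rayleigh_bound
proof (rule walk.rayleigh_bound_of_local_inequality[OF _ \<open>\<mu> < 1\<close>])
  fix g :: "nat \<Rightarrow> real"
  obtain f where gf: "\<forall>i<nv. g i = f (vs ! i)" using exists_function_on_vs by blast
  have "walk.act g = walk.act (\<lambda>i. f (vs ! i))" using gf by (intro walk.act_cong) auto
  then have "walk.inner_w (walk.act g) (walk.act g) = link_sq_norm \<tau> (link_walk \<tau> f)"
    unfolding link_sq_norm_eq using act_vs by (intro walk.inner_w_cong) auto
  moreover have "walk.quad_form g = walk.quad_form (\<lambda>i. f (vs ! i))"
    using gf by (intro walk.quad_form_cong) auto
  moreover have "walk.inner_w g g = walk.inner_w (\<lambda>i. f (vs ! i)) (\<lambda>i. f (vs ! i))"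
    using gf by (intro walk.inner_w_cong) auto
  moreover have "link_form \<tau> f / real k \<le> \<mu> * link_sq_norm \<tau> f + (1 - \<mu>) * link_sq_norm \<tau> (link_walk \<tau> f)"
    using local[of f] k_pos unfolding link_dim_eq by (simp add: divide_le_eq mult.commute)
  ultimately show "walk.quad_form g \<le> \<mu> * walk.inner_w g g + (1 - \<mu>) * walk.inner_w (walk.act g) (walk.act g)"
    unfolding quad_form_vs link_sq_norm_eq by simp
qed

end

section \<open>Trickle-down\<close>

context weighted_pure_complex
begin

lemma link_bound_trickle_down:
  assumes face: "\<tau> \<in> X" and two_le_codim: "card \<tau> + 2 \<le> d" and connected: "skel_connected (link X \<tau>)"
    and "\<mu> < 1" and cofaces: "\<And>x. insert x \<tau> \<in> X \<Longrightarrow> x \<notin> \<tau> \<Longrightarrow> link_bound (insert x \<tau>) \<mu>"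
  shows "link_bound \<tau> (\<mu> / (1 - \<mu>))"
proof -
  interpret connected_link X d P \<tau>
    using face two_le_codim connected by unfold_locales auto
  have "link_bound (insert x \<tau>) \<mu>" if "x \<in> ground - \<tau>" for x
    using cofaces that mass_eq_0 link_bound_if_mass_eq_0 by (cases "insert x \<tau> \<in> X") auto
  then show ?thesis
    using garland_local_inequality[OF finite_tau two_le_codim] \<open>\<mu> < 1\<close>
    by (intro link_bound_of_local_inequality) blast+
qed

lemma link_bound_of_top_links:
  fixes lam :: real
  assumes "0 < lam"
    and connected: "\<forall>\<tau>\<in>X. card \<tau> + 1 \<le> d \<longrightarrow> skel_connected (link X \<tau>)"
    and top: "\<forall>\<tau>\<in>X. card \<tau> + 1 = d \<longrightarrow>
       lambda2 (link X \<tau>) (d - card \<tau>) (link_dist X d P \<tau>) \<le> lam / (1 + (d - 1) * lam)"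
  shows "\<tau> \<in> X \<Longrightarrow> card \<tau> + 1 \<le> d \<Longrightarrow> link_bound \<tau> (lam / (1 + real (card \<tau>) * lam))"
proof (induction "d - (card \<tau> + 1)" arbitrary: \<tau>)
  case 0
  then have top_face: "card \<tau> + 1 = d" by simp
  interpret connected_link X d P \<tau> using 0 connected by unfold_locales auto
  have "lambda2 (link X \<tau>) (d - card \<tau>) (link_dist X d P \<tau>) \<le> lam / (1 + real (d - 1) * lam)"
    using top 0 top_face by blast
  moreover have "d - 1 = card \<tau>" using top_face by simp
  ultimately show ?case unfolding lambda2_le_iff_link_bound[symmetric] by simp
next
  case (Suc m)
  have "lam / (1 + real (Suc (card \<tau>)) * lam) < 1" using \<open>0 < lam\<close> by (simp add: algebra_simps add_pos_nonneg)
  moreover have "link_bound (insert x \<tau>) (lam / (1 + real (Suc (card \<tau>)) * lam))"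
    if "insert x \<tau> \<in> X" "x \<notin> \<tau>" for x
    using Suc.hyps(1)[of "insert x \<tau>"] Suc.hyps(2) Suc.prems that finite_face by simp
  ultimately have "link_bound \<tau> (lam / (1 + real (Suc (card \<tau>)) * lam)
      / (1 - lam / (1 + real (Suc (card \<tau>)) * lam)))"
    using Suc connected by (intro link_bound_trickle_down) auto
  then show ?case unfolding trickle_down_ratio[OF \<open>0 < lam\<close>] .
qed

end

theorem mainTheorem3:
  fixes X :: "'a set set" and d :: nat and P :: "'a set \<Rightarrow> real" and lam :: real
  assumes "weighted_complex X d P"
    and "d \<ge> 2"
    and "0 < lam" and "lam \<le> 1"
    and "\<forall>\<tau>\<in>X. card \<tau> + 1 \<le> d \<longrightarrow> skel_connected (link X \<tau>)"
    and "\<forall>\<tau>\<in>X. card \<tau> + 1 = d \<longrightarrow>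
           lambda2 (link X \<tau>) (d - card \<tau>) (link_dist X d P \<tau>) \<le> lam / (1 + (d - 1) * lam)"
  shows "local_spectral_expander X d P lam"
  unfolding local_spectral_expander_def
proof (intro ballI impI conjI)
  interpret weighted_pure_complex X d P by unfold_locales fact
  fix \<tau> assume face: "\<tau> \<in> X" and codim: "card \<tau> + 1 \<le> d"
  show connected: "skel_connected (link X \<tau>)" using assms(5) face codim by blast
  interpret connected_link X d P \<tau> using face codim connected by unfold_locales
  have "link_bound \<tau> (lam / (1 + real (card \<tau>) * lam))"
    using link_bound_of_top_links[OF assms(3,5,6) face codim] .
  then have "lambda2 (link X \<tau>) (d - card \<tau>) (link_dist X d P \<tau>) \<le> lam / (1 + real (card \<tau>) * lam)"
    using lambda2_le_iff_link_bound by blast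
  also have "\<dots> \<le> lam" using assms(3) by (simp add: divide_le_eq add_pos_nonneg)
  finally show "lambda2 (link X \<tau>) (d - card \<tau>) (link_dist X d P \<tau>) \<le> lam" .
qed

end
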